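(* For every constant $c>0$ there exist constants $C,a>0$ such that the following holds. Let $G=(V,E)$ be a $d$-regular undirected graph on $n=|V|$ vertices, $2\le d<n$, which is a $\lambda$ spectral expander with $\lambda>0$ and $n\ge c\,d^3\log(d)^4/\lambda$. Then the graph code $(\mathrm{enc}_G,\mathrm{dec}_G)$ is an $\varepsilon$-non-malleable code in the split-state model with $\varepsilon\le C\,\log(d)^a\,\frac{\lambda^{3/2}}{d}$. (In the paper's notation: if $n=\Omega(d^3\log(d)^4/\lambda)$ then the code is $\tilde O(\lambda^{3/2}/d)$-non-malleable.)
   Context: $E\subseteq V\times V$ is the symmetric set of ordered pairs of adjacent vertices. $G$ is a $\lambda$ spectral expander if, with $\lambda_1\ge\dots\ge\lambda_n$ the eigenvalues of its adjacency matrix, $\lambda\ge\max\{|\lambda_2|,\dots,|\lambda_n|\}$. The graph code: $\mathrm{enc}_G\colon\{0,1\}\to V\times V$ is randomized, with $\mathrm{enc}_G(0)$ uniform on $(V\times V)\setminus E$ and $\mathrm{enc}_G(1)$ uniform on $E$; $\mathrm{dec}_G(v_1,v_2)=1$ if $(v_1,v_2)\in E$ and $0$ otherwise. Split-state non-malleability: a coding scheme $\mathrm{enc}\colon\mathcal M\to\mathcal L\times\mathcal R$, $\mathrm{dec}\colon\mathcal L\times\mathcal R\to\mathcal M\cup\{\bot\}$ (here $\mathcal M=\{0,1\}$, $\mathcal L=\mathcal R=V$) with $\Pr[\mathrm{dec}(\mathrm{enc}(s))=s]=1$ is $\varepsilon$-non-malleable in the split-state model if for every pair of functions $g\colon\mathcal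 L\to\mathcal L$, $h\colon\mathcal R\to\mathcal R$ there is a distribution $D_{g,h}$ on $\mathcal M\cup\{*,\bot\}$ such that for every $s\in\mathcal M$ the random variable $\mathrm{dec}(g(L),h(R))$ with $(L,R)\leftarrow\mathrm{enc}(s)$ and the random variable obtained by sampling $\tilde s\leftarrow D_{g,h}$ and outputting $s$ if $\tilde s=*$ and $\tilde s$ otherwise, have statistical distance at most $\varepsilon$. *)

theory Defs
  imports "Jordan_Normal_Form.Char_Poly" "HOL-Probability.Probability_Mass_Function"
begin

definition regular_graph :: "nat \<Rightarrow> (nat \<times> nat) set \<Rightarrow> nat \<Rightarrow> bool" where
  "regular_graph n E d \<longleftrightarrow>
     E \<subseteq> {0..<n} \<times> {0..<n} \<and> sym E \<and> irrefl E \<and>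
     (\<forall>v\<in>{0..<n}. card {u. (v, u) \<in> E} = d)"

definition adj_mat :: "nat \<Rightarrow> (nat \<times> nat) set \<Rightarrow> real Matrix.mat" where
  "adj_mat n E = Matrix.mat n n (\<lambda>(i, j). if (i, j) \<in> E then 1 else 0)"

text \<open>Eigenvalues of the adjacency matrix, with multiplicity, listed in non-increasing order
(lambda_1 >= ... >= lambda_n): the roots of the characteristic polynomial.\<close>
definition graph_eigenvalues :: "nat \<Rightarrow> (nat \<times> nat) set \<Rightarrow> real list" where
  "graph_eigenvalues n E = rev (sorted_list_of_multiset (proots (char_poly (adj_mat n E))))"

definition spectral_expander :: "nat \<Rightarrow> (nat \<times> nat) set \<Rightarrow> real \<Rightarrow> bool" where
  "spectral_expander n E lam \<longleftrightarrow>
     (\<forall>i\<in>{1..<n}. \<bar>graph_eigenvalues n E ! i\<bar> \<le> lam)"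

definition stat_dist :: "'a pmf \<Rightarrow> 'a pmf \<Rightarrow> real" where
  "stat_dist p q = (SUP A. \<bar>measure_pmf.prob p A - measure_pmf.prob q A\<bar>)"

text \<open>Output of the simulator distribution D: a message, the symbol * (same), or bottom.\<close>
datatype 'm nm_out = Msg 'm | Same | Bot

definition nm_outcome :: "'m \<Rightarrow> 'm nm_out \<Rightarrow> 'm option" where
  "nm_outcome s t = (case t of Msg m \<Rightarrow> Some m | Same \<Rightarrow> Some s | Bot \<Rightarrow> None)"

definition split_state_nm ::
  "('m \<Rightarrow> ('l \<times> 'r) pmf) \<Rightarrow> ('l \<Rightarrow> 'r \<Rightarrow> 'm option) \<Rightarrow> 'l set \<Rightarrow> 'r set \<Rightarrow> real \<Rightarrow> bool" where
  "split_state_nm enc dec L R eps \<longleftrightarrow>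
     (\<forall>s. set_pmf (enc s) \<subseteq> L \<times> R \<and>
          measure_pmf.prob (enc s) {(l, r). dec l r = Some s} = 1) \<and>
     (\<forall>g h. (\<forall>x\<in>L. g x \<in> L) \<longrightarrow> (\<forall>y\<in>R. h y \<in> R) \<longrightarrow>
        (\<exists>D :: 'm nm_out pmf. \<forall>s.
           stat_dist (map_pmf (\<lambda>(l, r). dec (g l) (h r)) (enc s))
                     (map_pmf (nm_outcome s) D) \<le> eps))"

section \<open>The graph code (message False = 0, True = 1)\<close>

definition graph_enc :: "nat \<Rightarrow> (nat \<times> nat) set \<Rightarrow> bool \<Rightarrow> (nat \<times> nat) pmf" where
  "graph_enc n E b = (if b then pmf_of_set E
                      else pmf_of_set (({0..<n} \<times> {0..<n}) - E))"

definition graph_dec :: "(nat \<times> nat) set \<Rightarrow> nat \<Rightarrow> nat \<Rightarrow> bool option" where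
  "graph_dec E v1 v2 = Some ((v1, v2) \<in> E)"

end

(* The graph code decodes a tampered codeword (g l, h r) to 1 iff it is an edge. For one-bit
   messages a simulator exists as soon as tampering cannot make non-edges decode to 1 much more
   often than edges, and for the graph code this advantage is d (n - d) times smaller than the
   total defect  d/n |g^-1 x| |h^-1 y| - e(g^-1 x, h^-1 y)  over the edges (x, y).
   Pairs with a fibre of size at most t contribute at most 2 d^2 t. On the remaining pairs the
   expander mixing lemma, applied to a fibre of g and a union of fibres of h and combined with
   Cauchy-Schwarz, gives 2 lam sqrt n sqrt (d n / t + lam n). With t = d / lam this is
   O(lam^(3/2) / d) once n >= 2 d; for n < 2 d the density assumption forces lam^(3/2) >= Omega(d),
   so the trivial bound 1 suffices.
   The mixing lemma is obtained from the eigenvalue definition by the trace method: tr A^(2K) is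
   the sum of the 2K-th powers of the eigenvalues, which bounds |A^K g|^2 for g orthogonal to the
   constant vector, and the resulting factor n disappears on taking 2^m-th roots for K = 2^m. *)

theory Submission
  imports Defs "Jordan_Normal_Form.Schur_Decomposition"
begin

section \<open>Spectra of real symmetric matrices\<close>

lemma index_mult_mat_sum:
  assumes "A \<in> carrier_mat m n" "B \<in> carrier_mat n k" "i < m" "j < k"
  shows "(A * B) $$ (i, j) = (\<Sum>l<n. A $$ (i, l) * B $$ (l, j))"
  using assms by (simp add: scalar_prod_def lessThan_atLeast0)

lemma index_mult_mat_vec_sum:
  assumes "A \<in> carrier_mat m n" "v \<in> carrier_vec n" "i < m"
  shows "(A *\<^sub>v v) $ i = (\<Sum>j<n. A $$ (i, j) * v $ j)"
  using assms by (simp add: scalar_prod_def lessThan_atLeast0)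

lemma Im_eigenvalue_real_symmetric:
  fixes A :: "real mat"
  assumes A: "A \<in> carrier_mat n n"
    and sym: "\<And>i j. i < n \<Longrightarrow> j < n \<Longrightarrow> A $$ (i, j) = A $$ (j, i)"
    and ev: "eigenvalue (map_mat complex_of_real A) e"
  shows "Im e = 0"
proof -
  let ?Ac = "map_mat complex_of_real A"
  obtain v where v: "v \<in> carrier_vec n" "v \<noteq> 0\<^sub>v n" "?Ac *\<^sub>v v = e \<cdot>\<^sub>v v"
    using ev A unfolding eigenvalue_def eigenvector_def by auto
  have row: "(\<Sum>j<n. of_real (A $$ (i, j)) * v $ j) = e * v $ i" if "i < n" for i
    using index_mult_mat_vec_sum[of ?Ac n n v i] v that A by simp
  define S where "S = (\<Sum>i<n. cnj (v $ i) * (\<Sum>j<n. of_real (A $$ (i, j)) * v $ j))"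
  text \<open>The Hermitian form \<open>v\<^sup>* A v\<close> equals \<open>e |v|\<^sup>2\<close> and is real by symmetry of \<open>A\<close>.\<close>
  have "S = (\<Sum>i<n. e * (cnj (v $ i) * v $ i))"
    unfolding S_def by (intro sum.cong refl) (simp add: row)
  also have "\<dots> = e * of_real (\<Sum>i<n. (cmod (v $ i))\<^sup>2)"
    unfolding of_real_sum sum_distrib_left
    by (intro sum.cong refl) (metis complex_norm_square mult.commute)
  finally have S_eig: "S = e * of_real (\<Sum>i<n. (cmod (v $ i))\<^sup>2)" .
  have "cnj S = (\<Sum>j<n. \<Sum>i<n. v $ i * of_real (A $$ (i, j)) * cnj (v $ j))"
    unfolding S_def by (subst sum.swap) (simp add: sum_distrib_left mult.assoc)
  also have "\<dots> = S"
    unfolding S_def sum_distrib_left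
    by (intro sum.cong refl) (auto simp: sym mult_ac)
  finally have "Im S = 0"
    using Reals_cnj_iff complex_is_Real_iff by metis
  obtain i where i: "i < n" "v $ i \<noteq> 0"
    using v(1,2) by (metis carrier_vecD eq_vecI index_zero_vec)
  have "(\<Sum>i<n. (cmod (v $ i))\<^sup>2) > 0"
    by (rule sum_pos2[of _ i]) (use i in auto)
  with \<open>Im S = 0\<close> show ?thesis
    unfolding S_eig by simp
qed

interpretation of_real_poly_hom: map_poly_inj_comm_ring_hom "of_real :: real \<Rightarrow> complex" ..

lemma char_poly_real_symmetric_splits:
  fixes A :: "real mat"
  assumes A: "A \<in> carrier_mat n n"
    and sym: "\<And>i j. i < n \<Longrightarrow> j < n \<Longrightarrow> A $$ (i, j) = A $$ (j, i)"
  obtains rs where "char_poly A = (\<Prod>r\<leftarrow>rs. [:- r, 1:])"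
proof -
  let ?Ac = "map_mat complex_of_real A"
  have Ac: "?Ac \<in> carrier_mat n n" using A by simp
  obtain as where as: "char_poly ?Ac = (\<Prod>a\<leftarrow>as. [:- a, 1:])"
    using char_poly_factorized[OF Ac] by blast
  have real: "Im a = 0" if "a \<in> set as" for a
  proof -
    have "poly (char_poly ?Ac) a = 0"
      unfolding as by (rule linear_poly_root[OF that])
    then show ?thesis
      using Im_eigenvalue_real_symmetric[OF A sym] eigenvalue_root_char_poly[OF Ac] by blast
  qed
  have "map_poly complex_of_real (char_poly A) = char_poly ?Ac"
    using of_real_hom.char_poly_hom[OF A, where 'a = complex] by simp
  also have "\<dots> = (\<Prod>a\<leftarrow>as. [:- of_real (Re a), 1:])"
    unfolding as by (intro arg_cong[where f = prod_list] map_cong refl) (use real complex_eqI in auto)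
  also have "\<dots> = map_poly complex_of_real (\<Prod>r\<leftarrow>map Re as. [:- r, 1:])"
    unfolding of_real_poly_hom.hom_prod_list by (simp add: o_def)
  finally show ?thesis
    using that of_real_poly_hom.injectivity by blast
qed

definition mat_trace :: "'a::semiring_1 mat \<Rightarrow> 'a" where
  "mat_trace A = (\<Sum>i<dim_row A. A $$ (i, i))"

lemma mat_trace_similar:
  fixes A B :: "'a::comm_semiring_1 mat"
  assumes "similar_mat_wit A B P Q"
  shows "mat_trace A = mat_trace B"
proof -
  obtain n where A: "A \<in> carrier_mat n n" and B: "B \<in> carrier_mat n n"
    and P: "P \<in> carrier_mat n n" and Q: "Q \<in> carrier_mat n n"
    and QP: "Q * P = 1\<^sub>m n" and APBQ: "A = P * B * Q"
    using assms unfolding similar_mat_wit_def Let_def by auto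
  have PB: "P * B \<in> carrier_mat n n" using P B by simp
  have "mat_trace A = (\<Sum>i<n. \<Sum>m<n. (\<Sum>l<n. P $$ (i, l) * B $$ (l, m)) * Q $$ (m, i))"
    unfolding mat_trace_def APBQ using P
    by (intro sum.cong) (auto simp: index_mult_mat_sum[OF PB Q] index_mult_mat_sum[OF P B])
  also have "\<dots> = (\<Sum>i<n. \<Sum>m<n. \<Sum>l<n. P $$ (i, l) * B $$ (l, m) * Q $$ (m, i))"
    by (simp add: sum_distrib_right)
  also have "\<dots> = (\<Sum>l<n. \<Sum>m<n. B $$ (l, m) * (\<Sum>i<n. Q $$ (m, i) * P $$ (i, l)))"
    by (subst sum.swap, subst (2) sum.swap, subst sum.swap) (simp add: sum_distrib_left mult_ac)
  also have "\<dots> = (\<Sum>l<n. \<Sum>m<n. B $$ (l, m) * (if m = l then 1 else 0))"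
    using index_mult_mat_sum[OF Q P] by (intro sum.cong refl) (simp add: QP)
  also have "\<dots> = mat_trace B"
    unfolding mat_trace_def using B by (simp add: if_distrib cong: if_cong)
  finally show ?thesis .
qed

lemma upper_triangular_mult_mat:
  fixes A B :: "'a::semiring_0 mat"
  assumes A: "A \<in> carrier_mat n n" and B: "B \<in> carrier_mat n n"
    and ut: "upper_triangular A" "upper_triangular B"
  shows "upper_triangular (A * B)"
    and "i < n \<Longrightarrow> (A * B) $$ (i, i) = A $$ (i, i) * B $$ (i, i)"
proof -
  have zero: "A $$ (i, l) * B $$ (l, j) = 0"
    if "i < n" "l < n" "j \<le> i" "l \<noteq> i \<or> j < i" for i j l
  proof (cases "l < i")
    case True
    then show ?thesis using ut(1) A that unfolding upper_triangular_def by auto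
  next
    case False
    then have "j < l" using that by auto
    then show ?thesis using ut(2) B that unfolding upper_triangular_def by auto
  qed
  show "upper_triangular (A * B)"
  proof (intro upper_triangularI)
    fix i j assume "j < i" "i < dim_row (A * B)"
    then show "(A * B) $$ (i, j) = 0"
      using A by (simp add: index_mult_mat_sum[OF A B] zero)
  qed
  show "(A * B) $$ (i, i) = A $$ (i, i) * B $$ (i, i)" if "i < n"
    using that by (simp add: index_mult_mat_sum[OF A B] sum.remove[of _ i] zero)
qed

lemma upper_triangular_pow_mat:
  fixes B :: "'a::comm_semiring_1 mat"
  assumes B: "B \<in> carrier_mat n n" and ut: "upper_triangular B"
  shows "upper_triangular (B ^\<^sub>m k) \<and> (\<forall>i<n. (B ^\<^sub>m k) $$ (i, i) = B $$ (i, i) ^ k)"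
proof (induction k)
  case 0
  then show ?case using B by auto
next
  case (Suc k)
  have Bk: "B ^\<^sub>m k \<in> carrier_mat n n" using B by simp
  show ?case
    using upper_triangular_mult_mat[OF Bk B _ ut] Suc by (simp add: mult.commute)
qed

lemma mat_trace_pow_mat:
  fixes A :: "'a::conjugatable_ordered_field mat"
  assumes A: "A \<in> carrier_mat n n" and cp: "char_poly A = (\<Prod>r\<leftarrow>rs. [:- r, 1:])"
  shows "mat_trace (A ^\<^sub>m k) = (\<Sum>r\<leftarrow>rs. r ^ k)"
proof -
  obtain B P Q where "schur_decomposition A rs = (B, P, Q)"
    by (cases "schur_decomposition A rs") auto
  from schur_decomposition[OF A cp this]
  have sim: "similar_mat_wit A B P Q" and ut: "upper_triangular B" and diag: "diag_mat B = rs"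
    by auto
  have B: "B \<in> carrier_mat n n"
    using sim A unfolding similar_mat_wit_def Let_def by auto
  have "mat_trace (A ^\<^sub>m k) = mat_trace (B ^\<^sub>m k)"
    by (rule mat_trace_similar[OF similar_mat_wit_pow[OF sim]])
  also have "\<dots> = (\<Sum>i<n. B $$ (i, i) ^ k)"
    unfolding mat_trace_def using upper_triangular_pow_mat[OF B ut, of k] B by simp
  also have "\<dots> = (\<Sum>r\<leftarrow>rs. r ^ k)"
    unfolding diag[symmetric] diag_mat_def using B
    by (simp add: sum_list_sum_nth lessThan_atLeast0)
  finally show ?thesis .
qed

lemma eigenvalue_abs_le_row_sum:
  fixes A :: "real mat"
  assumes A: "A \<in> carrier_mat n n" and nonneg: "\<And>i j. i < n \<Longrightarrow> j < n \<Longrightarrow> A $$ (i, j) \<ge> 0"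
    and row_sum: "\<And>i. i < n \<Longrightarrow> (\<Sum>j<n. A $$ (i, j)) = d"
    and ev: "eigenvalue A r"
  shows "\<bar>r\<bar> \<le> d"
proof -
  obtain v where v: "v \<in> carrier_vec n" "v \<noteq> 0\<^sub>v n" "A *\<^sub>v v = r \<cdot>\<^sub>v v"
    using ev A unfolding eigenvalue_def eigenvector_def by auto
  text \<open>Look at the row of a coordinate of maximal modulus.\<close>
  obtain i where i: "i < n" "v $ i \<noteq> 0"
    using v(1,2) by (metis carrier_vecD eq_vecI index_zero_vec)
  define m where "m = Max ((\<lambda>j. \<bar>v $ j\<bar>) ` {..<n})"
  have "m \<in> (\<lambda>j. \<bar>v $ j\<bar>) ` {..<n}"
    unfolding m_def using i by (intro Max_in) auto
  then obtain k where k: "k < n" "m = \<bar>v $ k\<bar>"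
    by auto
  have max: "\<bar>v $ j\<bar> \<le> m" if "j < n" for j
    unfolding m_def using that by (intro Max_ge) auto
  have "m > 0"
    using max[OF i(1)] i(2) by simp
  have "\<bar>r\<bar> * m = \<bar>\<Sum>j<n. A $$ (k, j) * v $ j\<bar>"
    using index_mult_mat_vec_sum[OF A v(1) k(1)] v(3) v(1) k by (simp flip: abs_mult)
  also have "\<dots> \<le> (\<Sum>j<n. A $$ (k, j) * m)"
    by (rule order.trans[OF sum_abs], rule sum_mono)
      (use nonneg k max in \<open>auto simp: abs_mult intro: mult_left_mono\<close>)
  also have "\<dots> = d * m"
    using row_sum[OF k(1)] by (simp flip: sum_distrib_right)
  finally show ?thesis
    using \<open>m > 0\<close> by simp
qed

lemma proots_prod_linear: "proots (\<Prod>r\<leftarrow>rs. [:- r, 1:]) = mset (rs :: 'a::idom list)"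
proof (induction rs)
  case (Cons r rs)
  have "(\<Prod>r\<leftarrow>rs. [:- r, 1:]) \<noteq> 0"
    by (auto simp: prod_list_zero_iff)
  then have "proots ([:- r, 1:] * (\<Prod>r\<leftarrow>rs. [:- r, 1:])) = proots [:- r, 1:] + mset rs"
    using Cons.IH by (subst proots_mult) auto
  then show ?case
    using proots_linear_factor[of "- r"] by simp
qed simp

section \<open>Walks in regular graphs\<close>

definition adj :: "(nat \<times> nat) set \<Rightarrow> nat \<Rightarrow> nat \<Rightarrow> real" where
  "adj E x y = (if (x, y) \<in> E then 1 else 0)"

fun walks :: "nat \<Rightarrow> (nat \<times> nat) set \<Rightarrow> nat \<Rightarrow> nat \<Rightarrow> nat \<Rightarrow> real" where
  "walks n E 0 x y = (if x = y then 1 else 0)"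
| "walks n E (Suc k) x y = (\<Sum>z<n. walks n E k x z * adj E z y)"

lemma regular_graphD:
  assumes "regular_graph n E d"
  shows "E \<subseteq> {..<n} \<times> {..<n}" "sym E" "(x, x) \<notin> E"
    "x < n \<Longrightarrow> card {y. (x, y) \<in> E} = d"
  using assms unfolding regular_graph_def irrefl_def by (auto simp: lessThan_atLeast0)

lemma adj_sym: "sym E \<Longrightarrow> adj E x y = adj E y x"
  unfolding adj_def sym_def by metis

lemma adj_nonneg: "adj E x y \<ge> 0"
  unfolding adj_def by simp

lemma adj_row_sum:
  assumes "regular_graph n E d" "x < n"
  shows "(\<Sum>y<n. adj E x y) = d"
proof -
  have "{..<n} \<inter> {y. (x, y) \<in> E} = {y. (x, y) \<in> E}"
    using regular_graphD(1)[OF assms(1)] by auto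
  then show ?thesis
    using regular_graphD(4)[OF assms] unfolding adj_def by (simp add: sum.If_cases)
qed

lemma adj_col_sum:
  assumes "regular_graph n E d" "y < n"
  shows "(\<Sum>x<n. adj E x y) = d"
  using adj_row_sum[OF assms] adj_sym[OF regular_graphD(2)[OF assms(1)]] by simp

lemma adj_mat_carrier: "adj_mat n E \<in> carrier_mat n n"
  unfolding adj_mat_def by simp

lemma adj_mat_pow_index:
  assumes "x < n" "y < n"
  shows "(adj_mat n E ^\<^sub>m k) $$ (x, y) = walks n E k x y"
  using assms
proof (induction k arbitrary: y)
  case (Suc k)
  then show ?case
    using adj_mat_carrier[of n E] index_mult_mat_sum[of "adj_mat n E ^\<^sub>m k" n n "adj_mat n E" n x y]
    by (simp add: adj_mat_def adj_def)
qed (simp add: adj_mat_def)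

lemma walks_one: "x < n \<Longrightarrow> walks n E (Suc 0) x y = adj E x y"
  by (simp add: mult_if_delta)

lemma walks_add:
  assumes "x < n" "y < n"
  shows "walks n E (k + l) x y = (\<Sum>z<n. walks n E k x z * walks n E l z y)"
  using assms(2)
proof (induction l arbitrary: y)
  case 0
  then show ?case
    by (simp add: mult.commute[of "walks n E k x _"] mult_if_delta)
next
  case (Suc l)
  have "walks n E (k + Suc l) x y = (\<Sum>w<n. \<Sum>z<n. walks n E k x z * walks n E l z w * adj E w y)"
    using Suc by (simp add: sum_distrib_right)
  also have "\<dots> = (\<Sum>z<n. walks n E k x z * walks n E (Suc l) z y)"
    by (subst sum.swap) (simp add: sum_distrib_left mult_ac)
  finally show ?case .
qed

lemma walks_sym:
  assumes "sym E" "x < n" "y < n"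
  shows "walks n E k x y = walks n E k y x"
  using assms(2,3)
proof (induction k arbitrary: x y)
  case (Suc k)
  have "walks n E (Suc k) y x = walks n E (1 + k) y x"
    by simp
  also have "\<dots> = (\<Sum>z<n. walks n E k x z * adj E z y)"
    using Suc walks_one[of y n E] adj_sym[OF assms(1)]
    by (subst walks_add) (auto intro!: sum.cong simp: mult.commute)
  finally show ?case
    by simp
qed simp

lemma walks_row_sum:
  assumes "regular_graph n E d" "x < n"
  shows "(\<Sum>y<n. walks n E k x y) = real d ^ k"
proof (induction k)
  case (Suc k)
  have "(\<Sum>y<n. walks n E (Suc k) x y) = (\<Sum>z<n. walks n E k x z * (\<Sum>y<n. adj E z y))"
    by (simp add: sum_distrib_left) (rule sum.swap)
  also have "\<dots> = real d ^ Suc k"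
    using Suc adj_row_sum[OF assms(1)] by (simp flip: sum_distrib_right)
  finally show ?case .
qed (use assms in simp)

section \<open>The spectrum of a regular graph\<close>

lemma char_poly_adj_mat:
  assumes "sym E"
  shows "char_poly (adj_mat n E) = (\<Prod>r\<leftarrow>graph_eigenvalues n E. [:- r, 1:])"
proof -
  have sym: "adj_mat n E $$ (i, j) = adj_mat n E $$ (j, i)" if "i < n" "j < n" for i j
    using that assms unfolding adj_mat_def sym_def by auto
  obtain rs where rs: "char_poly (adj_mat n E) = (\<Prod>r\<leftarrow>rs. [:- r, 1:])"
    using char_poly_real_symmetric_splits[OF adj_mat_carrier sym] by blast
  then have "mset (graph_eigenvalues n E) = mset rs"
    unfolding graph_eigenvalues_def by (simp add: proots_prod_linear)
  then show ?thesis
    unfolding rs by (metis mset_map prod_mset_prod_list)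
qed

lemma length_graph_eigenvalues:
  assumes "sym E"
  shows "length (graph_eigenvalues n E) = n"
  using degree_monic_char_poly[OF adj_mat_carrier, of n E]
  unfolding char_poly_adj_mat[OF assms] by (simp add: degree_linear_factors)

lemma sum_graph_eigenvalues_power:
  assumes "sym E"
  shows "(\<Sum>x<n. walks n E k x x) = (\<Sum>r\<leftarrow>graph_eigenvalues n E. r ^ k)"
proof -
  have "(\<Sum>x<n. walks n E k x x) = mat_trace (adj_mat n E ^\<^sub>m k)"
    unfolding mat_trace_def using adj_mat_carrier[of n E] by (simp add: adj_mat_pow_index)
  also have "\<dots> = (\<Sum>r\<leftarrow>graph_eigenvalues n E. r ^ k)"
    by (rule mat_trace_pow_mat[OF adj_mat_carrier char_poly_adj_mat[OF assms]])
  finally show ?thesis .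
qed

lemma eigenvalue_adj_mat_degree:
  assumes reg: "regular_graph n E d" and "n > 0"
  shows "eigenvalue (adj_mat n E) d"
proof -
  have "Matrix.vec n (\<lambda>_. 1) \<noteq> (0\<^sub>v n :: real Matrix.vec)"
    using \<open>n > 0\<close> by (metis index_vec index_zero_vec(1) zero_neq_one)
  moreover have "adj_mat n E *\<^sub>v Matrix.vec n (\<lambda>_. 1) = real d \<cdot>\<^sub>v Matrix.vec n (\<lambda>_. 1)"
    using adj_row_sum[OF reg]
    by (intro eq_vecI) (auto simp: adj_mat_def adj_def scalar_prod_def lessThan_atLeast0)
  ultimately show ?thesis
    unfolding eigenvalue_def eigenvector_def using adj_mat_carrier[of n E]
    by (intro exI[of _ "Matrix.vec n (\<lambda>_. 1)"]) auto
qed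

lemma sorted_le_last: "sorted xs \<Longrightarrow> x \<in> set xs \<Longrightarrow> x \<le> last xs"
  by (induction xs) (auto simp: last_in_set)

lemma graph_eigenvalues_first:
  assumes reg: "regular_graph n E d" and "n > 0"
  shows "graph_eigenvalues n E ! 0 = d"
proof -
  let ?A = "adj_mat n E" and ?xs = "sorted_list_of_multiset (proots (char_poly (adj_mat n E)))"
  have cp: "char_poly ?A \<noteq> 0"
    using degree_monic_char_poly[OF adj_mat_carrier, of n E] by auto
  have root_iff: "r \<in> set ?xs \<longleftrightarrow> eigenvalue ?A r" for r
    using eigenvalue_root_char_poly[OF adj_mat_carrier] cp by simp
  have le: "r \<le> d" if "r \<in> set ?xs" for r
  proof -
    have "\<bar>r\<bar> \<le> d"
      by (rule eigenvalue_abs_le_row_sum[OF adj_mat_carrier _ _ root_iff[THEN iffD1, OF that]])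
        (use adj_row_sum[OF reg] in \<open>auto simp: adj_mat_def adj_def\<close>)
    then show ?thesis by simp
  qed
  have "real d \<in> set ?xs"
    using root_iff eigenvalue_adj_mat_degree[OF reg \<open>n > 0\<close>] by blast
  then have "?xs \<noteq> []" and "real d \<le> last ?xs"
    using sorted_le_last[OF sorted_sorted_list_of_multiset]
    by (auto simp del: set_sorted_list_of_multiset)
  moreover have "graph_eigenvalues n E ! 0 = last ?xs"
    unfolding graph_eigenvalues_def using \<open>?xs \<noteq> []\<close> by (simp add: hd_rev flip: hd_conv_nth)
  ultimately show ?thesis
    using le[of "last ?xs"] last_in_set[OF \<open>?xs \<noteq> []\<close>] by simp
qed

section \<open>The expander mixing lemma\<close>

definition sq_norm :: "nat \<Rightarrow> (nat \<Rightarrow> real) \<Rightarrow> real" where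
  "sq_norm n f = (\<Sum>x<n. (f x)\<^sup>2)"

definition walk_op :: "nat \<Rightarrow> (nat \<times> nat) set \<Rightarrow> nat \<Rightarrow> (nat \<Rightarrow> real) \<Rightarrow> nat \<Rightarrow> real" where
  "walk_op n E k f x = (\<Sum>y<n. walks n E k x y * f y)"

lemma sq_norm_nonneg: "sq_norm n f \<ge> 0"
  unfolding sq_norm_def by (simp add: sum_nonneg)

lemma abs_sum_mult_le_sq_norm:
  "\<bar>\<Sum>x<n. f x * g x\<bar> \<le> sqrt (sq_norm n f) * sqrt (sq_norm n g)"
proof -
  have "(\<Sum>x<n. f x * g x)\<^sup>2 \<le> sq_norm n f * sq_norm n g"
    unfolding sq_norm_def by (rule Cauchy_Schwarz_ineq_sum)
  then show ?thesis
    by (metis real_sqrt_abs real_sqrt_le_mono real_sqrt_mult)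
qed

lemma walk_op_compose:
  assumes "x < n"
  shows "walk_op n E k (walk_op n E l f) x = walk_op n E (k + l) f x"
proof -
  have "walk_op n E k (walk_op n E l f) x = (\<Sum>z<n. \<Sum>y<n. walks n E k x y * walks n E l y z * f z)"
    unfolding walk_op_def by (subst sum.swap) (simp add: sum_distrib_left mult_ac)
  also have "\<dots> = walk_op n E (k + l) f x"
    unfolding walk_op_def by (intro sum.cong refl) (simp add: walks_add[OF assms] sum_distrib_right)
  finally show ?thesis .
qed

lemma walk_op_self_adjoint:
  assumes "sym E"
  shows "(\<Sum>x<n. f x * walk_op n E k g x) = (\<Sum>y<n. walk_op n E k f y * g y)"
proof -
  have "(\<Sum>x<n. f x * walk_op n E k g x) = (\<Sum>y<n. \<Sum>x<n. f x * walks n E k x y * g y)"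
    unfolding walk_op_def by (subst sum.swap) (simp add: sum_distrib_left mult_ac)
  also have "\<dots> = (\<Sum>y<n. walk_op n E k f y * g y)"
    unfolding walk_op_def sum_distrib_right
    by (intro sum.cong refl) (simp add: walks_sym[OF assms] mult_ac)
  finally show ?thesis .
qed

lemma sq_norm_walk_op_square_le:
  assumes "sym E"
  shows "(sq_norm n (walk_op n E k g))\<^sup>2 \<le> sq_norm n (walk_op n E (2 * k) g) * sq_norm n g"
proof -
  have "sq_norm n (walk_op n E k g) = (\<Sum>y<n. walk_op n E k (walk_op n E k g) y * g y)"
    unfolding sq_norm_def power2_eq_square by (rule walk_op_self_adjoint[OF assms])
  also have "\<dots> = (\<Sum>y<n. walk_op n E (2 * k) g y * g y)"
    by (intro sum.cong refl) (simp add: walk_op_compose mult_2)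
  finally show ?thesis
    unfolding sq_norm_def by (metis Cauchy_Schwarz_ineq_sum)
qed

lemma sq_norm_walk_op_power_le:
  assumes "sym E"
  shows "sq_norm n (walk_op n E 1 g) ^ 2 ^ m \<le> sq_norm n g ^ (2 ^ m - 1) * sq_norm n (walk_op n E (2 ^ m) g)"
proof (induction m)
  case (Suc m)
  let ?q = "\<lambda>k. sq_norm n (walk_op n E k g)" and ?e = "2 ^ m - 1 :: nat"
  have "?q 1 ^ 2 ^ Suc m = (?q 1 ^ 2 ^ m)\<^sup>2"
    by (simp flip: power_mult add: mult.commute)
  also have "\<dots> \<le> (sq_norm n g ^ ?e * ?q (2 ^ m))\<^sup>2"
    using Suc by (intro power_mono) (simp_all add: sq_norm_nonneg)
  also have "\<dots> \<le> (sq_norm n g ^ ?e)\<^sup>2 * (?q (2 * 2 ^ m) * sq_norm n g)"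
    unfolding power_mult_distrib
    by (intro mult_left_mono sq_norm_walk_op_square_le[OF assms]) simp
  also have "\<dots> = sq_norm n g ^ (2 * ?e + 1) * ?q (2 ^ Suc m)"
    by (simp add: mult_ac) (metis power_add power_mult power_one_right mult.commute)
  also have "2 * ?e + 1 = 2 ^ Suc m - 1"
    using one_le_power[of "2::nat" m] by (simp only: power_Suc) linarith
  finally show ?case .
qed simp

lemma sum_sq_walks_centered:
  assumes reg: "regular_graph n E d" and "n > 0"
  shows "(\<Sum>x<n. \<Sum>y<n. (walks n E K x y - real d ^ K / n)\<^sup>2)
    = (\<Sum>x<n. walks n E (2 * K) x x) - real d ^ (2 * K)"
proof -
  let ?c = "real d ^ K / n"
  have row: "(\<Sum>y<n. (walks n E K x y - ?c)\<^sup>2) = walks n E (2 * K) x x - real d ^ K * ?c"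
    if "x < n" for x
  proof -
    have "(\<Sum>y<n. (walks n E K x y)\<^sup>2) = walks n E (2 * K) x x"
      using that walks_sym[OF regular_graphD(2)[OF reg]]
      by (simp add: mult_2 walks_add power2_eq_square)
    moreover have "(\<Sum>y<n. walks n E K x y) = real d ^ K"
      by (rule walks_row_sum[OF reg that])
    moreover have "(\<Sum>y<n. (walks n E K x y - ?c)\<^sup>2)
        = (\<Sum>y<n. (walks n E K x y)\<^sup>2) - 2 * ?c * (\<Sum>y<n. walks n E K x y) + n * ?c\<^sup>2"
      by (simp add: power2_diff sum_subtractf sum.distrib sum_distrib_left sum_divide_distrib mult_ac)
    ultimately show ?thesis
      using \<open>n > 0\<close> by (simp add: power2_eq_square field_simps)
  qed
  have "(\<Sum>x<n. \<Sum>y<n. (walks n E K x y - ?c)\<^sup>2) = (\<Sum>x<n. walks n E (2 * K) x x - real d ^ K * ?c)"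
    by (rule sum.cong[OF refl]) (rule row, simp)
  also have "\<dots> = (\<Sum>x<n. walks n E (2 * K) x x) - real d ^ (2 * K)"
    using \<open>n > 0\<close> by (simp add: sum_subtractf power_even_eq power2_eq_square)
  finally show ?thesis .
qed

lemma sum_walks_diag_le:
  assumes reg: "regular_graph n E d" and se: "spectral_expander n E lam" and "n > 0"
  shows "(\<Sum>x<n. walks n E (2 * K) x x) \<le> real d ^ (2 * K) + n * lam ^ (2 * K)"
proof -
  let ?ev = "graph_eigenvalues n E"
  have len: "length ?ev = n"
    by (rule length_graph_eigenvalues[OF regular_graphD(2)[OF reg]])
  have "(\<Sum>x<n. walks n E (2 * K) x x) = (\<Sum>i<n. (?ev ! i) ^ (2 * K))"
    unfolding sum_graph_eigenvalues_power[OF regular_graphD(2)[OF reg]]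
    using len by (simp add: sum_list_sum_nth lessThan_atLeast0)
  also have "\<dots> = real d ^ (2 * K) + (\<Sum>i\<in>{1..<n}. (?ev ! i) ^ (2 * K))"
    using \<open>n > 0\<close> graph_eigenvalues_first[OF reg \<open>n > 0\<close>]
    by (simp add: lessThan_atLeast0 sum.atLeast_Suc_lessThan)
  also have "(\<Sum>i\<in>{1..<n}. (?ev ! i) ^ (2 * K)) \<le> (\<Sum>i\<in>{1..<n}. lam ^ (2 * K))"
  proof (intro sum_mono)
    fix i assume "i \<in> {1..<n}"
    then have "\<bar>?ev ! i\<bar> ^ (2 * K) \<le> lam ^ (2 * K)"
      using se unfolding spectral_expander_def by (intro power_mono) auto
    then show "(?ev ! i) ^ (2 * K) \<le> lam ^ (2 * K)"
      by (simp add: power_even_abs)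
  qed
  also have "\<dots> \<le> n * lam ^ (2 * K)"
    by (simp add: power_mult mult_right_mono)
  finally show ?thesis by simp
qed

lemma sq_norm_walk_op_le:
  assumes reg: "regular_graph n E d" and se: "spectral_expander n E lam" and "n > 0"
    and g: "(\<Sum>y<n. g y) = 0"
  shows "sq_norm n (walk_op n E K g) \<le> n * lam ^ (2 * K) * sq_norm n g"
proof -
  let ?c = "real d ^ K / n"
  have "(\<Sum>y<n. (walks n E K x y - ?c) * g y) = walk_op n E K g x - ?c * (\<Sum>y<n. g y)" for x
    unfolding walk_op_def left_diff_distrib sum_subtractf sum_distrib_left by (simp add: mult_ac)
  then have "walk_op n E K g x = (\<Sum>y<n. (walks n E K x y - ?c) * g y)" for x
    using g by simp
  then have "sq_norm n (walk_op n E K g) \<le> (\<Sum>x<n. (\<Sum>y<n. (walks n E K x y - ?c)\<^sup>2) * sq_norm n g)"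
    unfolding sq_norm_def by (intro sum_mono) (simp add: Cauchy_Schwarz_ineq_sum)
  also have "\<dots> = ((\<Sum>x<n. walks n E (2 * K) x x) - real d ^ (2 * K)) * sq_norm n g"
    by (simp add: sum_sq_walks_centered[OF reg \<open>n > 0\<close>] flip: sum_distrib_right)
  also have "\<dots> \<le> n * lam ^ (2 * K) * sq_norm n g"
    using sum_walks_diag_le[OF reg se \<open>n > 0\<close>, of K] sq_norm_nonneg[of n g]
    by (simp add: mult_right_mono)
  finally show ?thesis .
qed

lemma le_one_if_pow2_bounded:
  fixes r :: real
  assumes "r \<ge> 0" and bounded: "\<And>m. r ^ 2 ^ m \<le> C"
  shows "r \<le> 1"
proof (rule ccontr)
  assume "\<not> r \<le> 1"
  obtain m :: nat where m: "C / (r - 1) < m"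
    using reals_Archimedean2 by blast
  have "real m < 2 ^ m"
    using less_exp[of m] by (metis of_nat_less_iff of_nat_numeral of_nat_power)
  have "C < m * (r - 1)"
    using m \<open>\<not> r \<le> 1\<close> by (simp add: divide_less_eq)
  also have "\<dots> < 2 ^ m * (r - 1)"
    using \<open>real m < 2 ^ m\<close> \<open>\<not> r \<le> 1\<close> by (intro mult_strict_right_mono) auto
  also have "\<dots> \<le> (1 + (r - 1)) ^ 2 ^ m"
    using Bernoulli_inequality[of "r - 1" "2 ^ m"] \<open>\<not> r \<le> 1\<close> by simp
  finally show False
    using bounded[of m] by simp
qed

text \<open>The trace bound for \<open>A\<^sup>K\<close> carries a factor \<open>n\<close>; taking \<open>K = 2\<^sup>m\<close> and \<open>2\<^sup>m\<close>-th roots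
  removes it.\<close>

lemma sq_norm_adj_op_le:
  assumes reg: "regular_graph n E d" and se: "spectral_expander n E lam" and "n > 0"
    and "lam > 0" and g: "(\<Sum>y<n. g y) = 0"
  shows "sq_norm n (walk_op n E 1 g) \<le> lam\<^sup>2 * sq_norm n g"
proof (cases "sq_norm n g = 0")
  case True
  then show ?thesis
    using sq_norm_walk_op_le[OF reg se \<open>n > 0\<close> g, of 1] by simp
next
  case False
  then have q: "sq_norm n g > 0"
    using sq_norm_nonneg[of n g] by simp
  let ?r = "sq_norm n (walk_op n E 1 g) / (lam\<^sup>2 * sq_norm n g)"
  have "?r \<le> 1"
  proof (rule le_one_if_pow2_bounded)
    show "?r \<ge> 0"
      using sq_norm_nonneg q by simp
    fix m :: nat
    have "sq_norm n (walk_op n E 1 g) ^ 2 ^ m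
        \<le> sq_norm n g ^ (2 ^ m - 1) * (n * lam ^ (2 * 2 ^ m) * sq_norm n g)"
      using sq_norm_walk_op_power_le[OF regular_graphD(2)[OF reg], of n g m]
        sq_norm_walk_op_le[OF reg se \<open>n > 0\<close> g, of "2 ^ m"]
      by (meson order.trans mult_left_mono zero_le_power sq_norm_nonneg)
    also have "\<dots> = n * (lam\<^sup>2 * sq_norm n g) ^ 2 ^ m"
    proof -
      have "sq_norm n g ^ (2 ^ m - 1) * sq_norm n g = sq_norm n g ^ 2 ^ m"
        by (metis power_minus_mult zero_less_power pos2)
      then show ?thesis
        by (simp add: power_mult_distrib power_mult mult_ac)
    qed
    finally show "?r ^ 2 ^ m \<le> n"
      using \<open>lam > 0\<close> q by (simp add: power_divide divide_le_eq)
  qed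
  then show ?thesis
    using \<open>lam > 0\<close> q by (simp add: divide_le_eq)
qed

lemma sum_centered:
  fixes f :: "nat \<Rightarrow> real"
  assumes "n > 0"
  shows "(\<Sum>x<n. f x - (\<Sum>y<n. f y) / n) = 0"
  using assms by (simp add: sum_subtractf)

lemma sq_norm_centered_le:
  "sq_norm n (\<lambda>x. f x - (\<Sum>y<n. f y) / n) \<le> sq_norm n f"
proof -
  let ?m = "(\<Sum>y<n. f y) / n"
  have "sq_norm n (\<lambda>x. f x - ?m) = sq_norm n f - 2 * ?m * (\<Sum>x<n. f x) + n * ?m\<^sup>2"
    unfolding sq_norm_def power2_diff
    by (simp add: sum_subtractf sum.distrib sum_distrib_left sum_divide_distrib mult_ac)
  also have "\<dots> = sq_norm n f - n * ?m\<^sup>2"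
    by (cases "n = 0") (simp_all add: power2_eq_square field_simps)
  finally show ?thesis
    by simp
qed

lemma adj_form_centered:
  fixes f g :: "nat \<Rightarrow> real"
  assumes reg: "regular_graph n E d" and "n > 0"
  defines "f0 \<equiv> \<lambda>x. f x - (\<Sum>y<n. f y) / n" and "g0 \<equiv> \<lambda>x. g x - (\<Sum>y<n. g y) / n"
  shows "(\<Sum>x<n. \<Sum>y<n. adj E x y * f x * g y) - d / n * (\<Sum>x<n. f x) * (\<Sum>y<n. g y)
    = (\<Sum>x<n. f0 x * walk_op n E 1 g0 x)"
proof -
  define mf where "mf = (\<Sum>y<n. f y) / n"
  define mg where "mg = (\<Sum>y<n. g y) / n"
  have sum_f0: "(\<Sum>x<n. f0 x) = 0" and sum_g0: "(\<Sum>y<n. g0 y) = 0"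
    unfolding f0_def g0_def using sum_centered \<open>n > 0\<close> by blast+
  have f0: "f0 = (\<lambda>x. f x - mf)" and g0: "g0 = (\<lambda>x. g x - mg)"
    unfolding f0_def g0_def mf_def mg_def by (rule refl)+
  have "adj E x y * f x * g y = adj E x y * f0 x * g0 y + mg * (adj E x y * f0 x)
      + mf * (adj E x y * g0 y) + mf * mg * adj E x y" for x y
    unfolding f0 g0 by (simp add: algebra_simps)
  then have "(\<Sum>x<n. \<Sum>y<n. adj E x y * f x * g y)
      = (\<Sum>x<n. \<Sum>y<n. adj E x y * f0 x * g0 y) + mg * (\<Sum>x<n. \<Sum>y<n. adj E x y * f0 x)
        + mf * (\<Sum>x<n. \<Sum>y<n. adj E x y * g0 y) + mf * mg * (\<Sum>x<n. \<Sum>y<n. adj E x y)"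
    by (simp only: sum.distrib sum_distrib_left)
  also have "(\<Sum>x<n. \<Sum>y<n. adj E x y * f0 x) = (\<Sum>x<n. d * f0 x)"
    by (intro sum.cong refl) (simp add: adj_row_sum[OF reg] flip: sum_distrib_right)
  also have "(\<Sum>x<n. \<Sum>y<n. adj E x y * g0 y) = (\<Sum>y<n. d * g0 y)"
    by (subst sum.swap, intro sum.cong refl) (simp add: adj_col_sum[OF reg] flip: sum_distrib_right)
  also have "(\<Sum>x<n. \<Sum>y<n. adj E x y) = n * d"
    by (simp add: adj_row_sum[OF reg])
  also have "(\<Sum>x<n. \<Sum>y<n. adj E x y * f0 x * g0 y) = (\<Sum>x<n. f0 x * walk_op n E 1 g0 x)"
    unfolding walk_op_def
    by (intro sum.cong refl) (simp add: walks_one sum_distrib_left mult_ac del: walks.simps)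
  finally show ?thesis
    using \<open>n > 0\<close> sum_f0 sum_g0 by (simp add: mf_def mg_def flip: sum_distrib_left)
qed

theorem expander_mixing:
  assumes reg: "regular_graph n E d" and se: "spectral_expander n E lam" and "n > 0"
    and "lam > 0"
  shows "\<bar>(\<Sum>x<n. \<Sum>y<n. adj E x y * f x * g y) - d / n * (\<Sum>x<n. f x) * (\<Sum>y<n. g y)\<bar>
          \<le> lam * sqrt (sq_norm n f) * sqrt (sq_norm n g)"
proof -
  define f0 where "f0 = (\<lambda>x. f x - (\<Sum>y<n. f y) / n)"
  define g0 where "g0 = (\<lambda>x. g x - (\<Sum>y<n. g y) / n)"
  have "\<bar>(\<Sum>x<n. \<Sum>y<n. adj E x y * f x * g y) - d / n * (\<Sum>x<n. f x) * (\<Sum>y<n. g y)\<bar>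
      = \<bar>\<Sum>x<n. f0 x * walk_op n E 1 g0 x\<bar>"
    unfolding f0_def g0_def adj_form_centered[OF reg \<open>n > 0\<close>] ..
  also have "\<dots> \<le> sqrt (sq_norm n f0) * sqrt (sq_norm n (walk_op n E 1 g0))"
    by (rule abs_sum_mult_le_sq_norm)
  also have "\<dots> \<le> sqrt (sq_norm n f) * (lam * sqrt (sq_norm n g))"
  proof (intro mult_mono)
    show "sqrt (sq_norm n f0) \<le> sqrt (sq_norm n f)"
      unfolding f0_def by (intro real_sqrt_le_mono sq_norm_centered_le)
    have "sqrt (sq_norm n (walk_op n E 1 g0)) \<le> sqrt (lam\<^sup>2 * sq_norm n g0)"
      using sum_centered[OF \<open>n > 0\<close>, of g]
      by (intro real_sqrt_le_mono sq_norm_adj_op_le[OF reg se \<open>n > 0\<close> \<open>lam > 0\<close>])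
        (simp add: g0_def)
    also have "\<dots> \<le> lam * sqrt (sq_norm n g)"
      using \<open>lam > 0\<close> sq_norm_centered_le[of n g] unfolding g0_def
      by (simp add: real_sqrt_mult)
    finally show "sqrt (sq_norm n (walk_op n E 1 g0)) \<le> lam * sqrt (sq_norm n g)" .
  qed (simp_all add: sq_norm_nonneg)
  finally show ?thesis
    by (simp add: mult_ac)
qed

definition edges_between :: "(nat \<times> nat) set \<Rightarrow> nat set \<Rightarrow> nat set \<Rightarrow> real" where
  "edges_between E S T = (\<Sum>u\<in>S. \<Sum>v\<in>T. adj E u v)"

corollary expander_mixing_sets:
  assumes reg: "regular_graph n E d" and se: "spectral_expander n E lam" and "n > 0"
    and "lam > 0" and S: "S \<subseteq> {..<n}" and T: "T \<subseteq> {..<n}"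
  shows "\<bar>edges_between E S T - d / n * card S * card T\<bar> \<le> lam * sqrt (card S * card T)"
proof -
  let ?f = "\<lambda>x. if x \<in> S then 1 else 0 :: real" and ?g = "\<lambda>x. if x \<in> T then 1 else 0 :: real"
  have restrict: "(\<Sum>x<n. if x \<in> A then h x else 0) = (\<Sum>x\<in>A. h x)" if "A \<subseteq> {..<n}" for A h
    using that by (simp add: sum.If_cases Int_absorb1)
  have "(\<Sum>x<n. \<Sum>y<n. adj E x y * ?f x * ?g y)
      = (\<Sum>x<n. if x \<in> S then (\<Sum>y<n. if y \<in> T then adj E x y else 0) else 0)"
    by (intro sum.cong refl) (auto intro: sum.cong)
  also have "\<dots> = (\<Sum>x\<in>S. \<Sum>y\<in>T. adj E x y)"
    using S by (simp add: restrict[OF S] restrict[OF T] subset_eq)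
  finally have edges: "(\<Sum>x<n. \<Sum>y<n. adj E x y * ?f x * ?g y) = edges_between E S T"
    unfolding edges_between_def .
  have card_S: "(\<Sum>x<n. ?f x) = card S" and card_T: "(\<Sum>x<n. ?g x) = card T"
    using S T by (simp_all add: sum.If_cases Int_absorb1)
  have sq: "(?f x)\<^sup>2 = ?f x" "(?g x)\<^sup>2 = ?g x" for x
    by simp_all
  have norms: "sq_norm n ?f = card S" "sq_norm n ?g = card T"
    unfolding sq_norm_def sq using card_S card_T by simp_all
  show ?thesis
    using expander_mixing[OF reg se \<open>n > 0\<close> \<open>lam > 0\<close>, of ?f ?g]
    unfolding edges card_S card_T norms
    by (simp add: real_sqrt_mult)
qed

section \<open>Edge defects under split-state tampering\<close>

lemma edges_between_nonneg: "edges_between E S T \<ge> 0"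
  unfolding edges_between_def by (intro sum_nonneg adj_nonneg)

lemma edges_between_sym: "sym E \<Longrightarrow> edges_between E S T = edges_between E T S"
  unfolding edges_between_def by (subst sum.swap) (simp add: adj_sym)

locale tampering =
  fixes n d :: nat and E :: "(nat \<times> nat) set" and g h :: "nat \<Rightarrow> nat"
  assumes reg: "regular_graph n E d" and n_pos: "n > 0"
    and g_range: "\<And>u. u < n \<Longrightarrow> g u < n" and h_range: "\<And>v. v < n \<Longrightarrow> h v < n"
begin

definition g_fibre :: "nat \<Rightarrow> nat set" where "g_fibre x = {u\<in>{..<n}. g u = x}"
definition h_fibre :: "nat \<Rightarrow> nat set" where "h_fibre y = {v\<in>{..<n}. h v = y}"
definition a :: "nat \<Rightarrow> real" where "a x = card (g_fibre x)"
definition b :: "nat \<Rightarrow> real" where "b y = card (h_fibre y)"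

definition defect :: "nat \<Rightarrow> nat \<Rightarrow> real" where
  "defect x y = d / n * a x * b y - edges_between E (g_fibre x) (h_fibre y)"

lemma g_fibre_subset: "g_fibre x \<subseteq> {..<n}"
  unfolding g_fibre_def by auto

lemma sum_over_g_fibres: "(\<Sum>u<n. F u (g u)) = (\<Sum>x<n. \<Sum>u\<in>g_fibre x. F u x)"
proof -
  have "(\<Sum>u<n. F u (g u)) = (\<Sum>x<n. \<Sum>u\<in>g_fibre x. F u (g u))"
    unfolding g_fibre_def by (rule sum.group[symmetric]) (use g_range in auto)
  also have "\<dots> = (\<Sum>x<n. \<Sum>u\<in>g_fibre x. F u x)"
    by (intro sum.cong refl) (auto simp: g_fibre_def)
  finally show ?thesis .
qed

lemma sum_over_h_fibres: "(\<Sum>v<n. F v (h v)) = (\<Sum>y<n. \<Sum>v\<in>h_fibre y. F v y)"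
proof -
  have "(\<Sum>v<n. F v (h v)) = (\<Sum>y<n. \<Sum>v\<in>h_fibre y. F v (h v))"
    unfolding h_fibre_def by (rule sum.group[symmetric]) (use h_range in auto)
  also have "\<dots> = (\<Sum>y<n. \<Sum>v\<in>h_fibre y. F v y)"
    by (intro sum.cong refl) (auto simp: h_fibre_def)
  finally show ?thesis .
qed

lemma sum_a: "(\<Sum>x<n. a x) = n"
  using sum_over_g_fibres[of "\<lambda>_ _. 1 :: real"] unfolding a_def by simp

lemma sum_b: "(\<Sum>y<n. b y) = n"
  using sum_over_h_fibres[of "\<lambda>_ _. 1 :: real"] unfolding b_def by simp

lemma a_nonneg [simp]: "a x \<ge> 0"
  unfolding a_def by simp

lemma b_nonneg [simp]: "b y \<ge> 0"
  unfolding b_def by simp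

lemma tampered_edges:
  "(\<Sum>u<n. \<Sum>v<n. adj E (g u) (h v)) = (\<Sum>x<n. \<Sum>y<n. adj E x y * a x * b y)"
proof -
  have "(\<Sum>u<n. \<Sum>v<n. adj E (g u) (h v)) = (\<Sum>u<n. \<Sum>y<n. \<Sum>v\<in>h_fibre y. adj E (g u) y)"
    by (intro sum.cong refl sum_over_h_fibres)
  also have "\<dots> = (\<Sum>x<n. \<Sum>u\<in>g_fibre x. \<Sum>y<n. \<Sum>v\<in>h_fibre y. adj E x y)"
    by (rule sum_over_g_fibres)
  also have "\<dots> = (\<Sum>x<n. \<Sum>y<n. adj E x y * a x * b y)"
    by (simp add: a_def b_def sum_distrib_left mult_ac)
  finally show ?thesis .
qed

lemma tampered_edges_kept:
  "(\<Sum>u<n. \<Sum>v<n. adj E u v * adj E (g u) (h v))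
    = (\<Sum>x<n. \<Sum>y<n. adj E x y * edges_between E (g_fibre x) (h_fibre y))"
proof -
  have "(\<Sum>u<n. \<Sum>v<n. adj E u v * adj E (g u) (h v))
      = (\<Sum>x<n. \<Sum>u\<in>g_fibre x. \<Sum>y<n. \<Sum>v\<in>h_fibre y. adj E u v * adj E x y)"
    by (subst sum_over_h_fibres, rule sum_over_g_fibres)
  also have "\<dots> = (\<Sum>x<n. \<Sum>y<n. \<Sum>u\<in>g_fibre x. \<Sum>v\<in>h_fibre y. adj E x y * adj E u v)"
    by (rule sum.cong[OF refl], subst sum.swap) (simp add: mult.commute)
  also have "\<dots> = (\<Sum>x<n. \<Sum>y<n. adj E x y * edges_between E (g_fibre x) (h_fibre y))"
    by (simp add: edges_between_def sum_distrib_left)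
  finally show ?thesis .
qed

lemma edge_defect_sum_eq:
  "(\<Sum>x<n. \<Sum>y<n. adj E x y * defect x y)
    = d / n * (\<Sum>u<n. \<Sum>v<n. adj E (g u) (h v)) - (\<Sum>u<n. \<Sum>v<n. adj E u v * adj E (g u) (h v))"
  unfolding tampered_edges tampered_edges_kept defect_def
  by (simp add: right_diff_distrib sum_subtractf sum_distrib_left mult_ac)

lemma light_pair_defect_le:
  fixes t :: real
  assumes "t \<ge> 0" and light: "a x \<le> t \<or> b y \<le> t"
  shows "adj E x y * defect x y \<le> adj E x y * (d / n * t * (a x + b y))"
proof -
  have "a x * b y \<le> t * (a x + b y)"
    using light
  proof
    assume "a x \<le> t"
    then have "a x * b y \<le> t * b y"
      by (rule mult_right_mono) simp
    moreover have "t * a x \<ge> 0"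
      using \<open>t \<ge> 0\<close> by simp
    ultimately show ?thesis
      unfolding distrib_left by linarith
  next
    assume "b y \<le> t"
    then have "a x * b y \<le> a x * t"
      by (rule mult_left_mono) simp
    moreover have "t * b y \<ge> 0"
      using \<open>t \<ge> 0\<close> by simp
    ultimately show ?thesis
      unfolding distrib_left by (simp add: mult.commute)
  qed
  then have "d / n * (a x * b y) \<le> d / n * (t * (a x + b y))"
    by (rule mult_left_mono) simp
  then have "defect x y \<le> d / n * t * (a x + b y)"
    using edges_between_nonneg[of E "g_fibre x" "h_fibre y"] unfolding defect_def mult.assoc
    by linarith
  then show ?thesis
    by (rule mult_left_mono[OF _ adj_nonneg])
qed

lemma light_defect_le:
  fixes t :: real
  assumes "t \<ge> 0"
  shows "(\<Sum>x<n. \<Sum>y<n. if a x \<le> t \<or> b y \<le> t then adj E x y * defect x y else 0)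
    \<le> 2 * real d ^ 2 * t"
proof -
  define c where "c = real d / n"
  have "(if a x \<le> t \<or> b y \<le> t then adj E x y * defect x y else 0)
      \<le> adj E x y * c * t * b y + adj E x y * c * a x * t" for x y
    using light_pair_defect_le[OF assms, of x y] assms adj_nonneg[of E x y]
    by (auto simp: c_def algebra_simps)
  then have "(\<Sum>x<n. \<Sum>y<n. if a x \<le> t \<or> b y \<le> t then adj E x y * defect x y else 0)
      \<le> (\<Sum>x<n. \<Sum>y<n. adj E x y * c * t * b y) + (\<Sum>x<n. \<Sum>y<n. adj E x y * c * a x * t)"
    unfolding sum.distrib[symmetric] by (intro sum_mono)
  also have "(\<Sum>x<n. \<Sum>y<n. adj E x y * c * t * b y) = (\<Sum>y<n. (\<Sum>x<n. adj E x y) * (c * t * b y))"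
    by (subst sum.swap) (simp add: sum_distrib_right sum_distrib_left mult_ac)
  also have "\<dots> = (\<Sum>y<n. d * (c * t * b y))"
    by (intro sum.cong refl) (simp add: adj_col_sum[OF reg])
  also have "(\<Sum>x<n. \<Sum>y<n. adj E x y * c * a x * t) = (\<Sum>x<n. (\<Sum>y<n. adj E x y) * (c * t * a x))"
    by (simp add: sum_distrib_right sum_distrib_left mult_ac)
  also have "\<dots> = (\<Sum>x<n. d * (c * t * a x))"
    by (intro sum.cong refl) (simp add: adj_row_sum[OF reg])
  also have "(\<Sum>y<n. d * (c * t * b y)) + (\<Sum>x<n. d * (c * t * a x)) = 2 * d * (c * n) * t"
    by (simp add: sum_a sum_b mult_ac flip: sum_distrib_left)
  also have "c * n = d"
    using n_pos by (simp add: c_def)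
  finally show ?thesis
    by (simp add: power2_eq_square mult_ac)
qed

end

locale expander_tampering = tampering +
  fixes lam :: real
  assumes se: "spectral_expander n E lam" and lam_pos: "lam > 0"
begin

text \<open>The defects in row \<open>x\<close> over \<open>Y\<close> add up to the defect between the fibre over \<open>x\<close> and the
  union of the fibres over \<open>Y\<close>, which the expander mixing lemma bounds.\<close>

lemma fibre_row_defect_le:
  assumes Y: "Y \<subseteq> {..<n}"
  shows "(\<Sum>y\<in>Y. defect x y) \<le> lam * sqrt (a x * (\<Sum>y\<in>Y. b y))"
proof -
  define U where "U = {v\<in>{..<n}. h v \<in> Y}"
  have fibres: "(\<Sum>v\<in>U. F v) = (\<Sum>y\<in>Y. \<Sum>v\<in>h_fibre y. F v)" for F
  proof -
    have "finite Y"
      using Y finite_subset by blast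
    then have "(\<Sum>y\<in>Y. sum F {v\<in>U. h v = y}) = sum F U"
      by (intro sum.group) (auto simp: U_def)
    moreover have "{v\<in>U. h v = y} = h_fibre y" if "y \<in> Y" for y
      using that unfolding U_def h_fibre_def by auto
    ultimately show ?thesis
      by simp
  qed
  have card_U: "card U = (\<Sum>y\<in>Y. b y)"
    using fibres[of "\<lambda>_. 1 :: real"] by (simp add: b_def)
  have "(\<Sum>y\<in>Y. defect x y) = d / n * a x * card U - edges_between E (g_fibre x) U"
    using fibres[of "adj E _"]
    by (simp add: defect_def edges_between_def card_U sum_subtractf sum_distrib_left
        sum_divide_distrib flip: sum.swap[of _ "g_fibre x"])
  also have "\<dots> \<le> lam * sqrt (a x * card U)"
    using expander_mixing_sets[OF reg se n_pos lam_pos g_fibre_subset, of U x]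
    unfolding a_def U_def by (simp add: abs_le_iff subset_eq)
  finally show ?thesis
    by (simp add: card_U)
qed

lemma fibre_defect_sum_le:
  assumes Y: "\<And>x. Y x \<subseteq> {..<n}"
  shows "(\<Sum>x<n. \<Sum>y\<in>Y x. defect x y) \<le> lam * sqrt n * sqrt (\<Sum>x<n. \<Sum>y\<in>Y x. b y)"
proof -
  define u where "u x = (\<Sum>y\<in>Y x. b y)" for x
  have u_nonneg: "u x \<ge> 0" for x
    unfolding u_def by (intro sum_nonneg b_nonneg)
  have "(\<Sum>x<n. \<Sum>y\<in>Y x. defect x y) \<le> lam * (\<Sum>x<n. sqrt (a x) * sqrt (u x))"
    unfolding sum_distrib_left using fibre_row_defect_le[OF Y]
    by (intro sum_mono) (simp add: u_def real_sqrt_mult)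
  also have "\<dots> \<le> lam * (sqrt (sq_norm n (\<lambda>x. sqrt (a x))) * sqrt (sq_norm n (\<lambda>x. sqrt (u x))))"
    using abs_sum_mult_le_sq_norm[where n = n and f = "\<lambda>x. sqrt (a x)" and g = "\<lambda>x. sqrt (u x)"]
      lam_pos by (intro mult_left_mono) auto
  also have "sq_norm n (\<lambda>x. sqrt (a x)) = n"
    unfolding sq_norm_def using sum_a by simp
  also have "sq_norm n (\<lambda>x. sqrt (u x)) = (\<Sum>x<n. u x)"
    unfolding sq_norm_def using u_nonneg by simp
  finally show ?thesis
    unfolding u_def by (simp add: mult_ac)
qed

definition heavy_a :: "real \<Rightarrow> nat \<Rightarrow> real" where
  "heavy_a t x = (if t < a x then sqrt (a x) else 0)"

definition heavy_b :: "real \<Rightarrow> nat \<Rightarrow> real" where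
  "heavy_b t y = (if t < b y then sqrt (b y) else 0)"

lemma heavy_edge_weight_le:
  assumes t: "t > 0"
  shows "(\<Sum>x<n. \<Sum>y<n. adj E x y * heavy_a t x * heavy_b t y) \<le> real d * n / t + lam * n"
proof -
  have sqrt_le: "sqrt r \<le> r / sqrt t" if "t < r" for r
  proof -
    have "sqrt r = r / sqrt r"
      using that t by (simp add: real_div_sqrt)
    also have "\<dots> \<le> r / sqrt t"
      using that t by (intro divide_left_mono) auto
    finally show ?thesis .
  qed
  have heavy_a_le: "heavy_a t x \<le> a x / sqrt t" and heavy_b_le: "heavy_b t y \<le> b y / sqrt t" for x y
    using t by (auto simp: heavy_a_def heavy_b_def sqrt_le)
  have sum_heavy_a: "(\<Sum>x<n. heavy_a t x) \<le> n / sqrt t"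
    using sum_mono[of "{..<n}" "heavy_a t" "\<lambda>x. a x / sqrt t", OF heavy_a_le]
    by (simp add: sum_a flip: sum_divide_distrib)
  have sum_heavy_b: "(\<Sum>y<n. heavy_b t y) \<le> n / sqrt t"
    using sum_mono[of "{..<n}" "heavy_b t" "\<lambda>y. b y / sqrt t", OF heavy_b_le]
    by (simp add: sum_b flip: sum_divide_distrib)
  have "sq_norm n (heavy_a t) \<le> (\<Sum>x<n. a x)" "sq_norm n (heavy_b t) \<le> (\<Sum>y<n. b y)"
    unfolding sq_norm_def by (auto intro!: sum_mono simp: heavy_a_def heavy_b_def)
  then have sq_norms: "sq_norm n (heavy_a t) \<le> n" "sq_norm n (heavy_b t) \<le> n"
    by (simp_all add: sum_a sum_b)
  have "(\<Sum>x<n. \<Sum>y<n. adj E x y * heavy_a t x * heavy_b t y)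
      \<le> d / n * (\<Sum>x<n. heavy_a t x) * (\<Sum>y<n. heavy_b t y)
        + lam * sqrt (sq_norm n (heavy_a t)) * sqrt (sq_norm n (heavy_b t))"
    using expander_mixing[OF reg se n_pos lam_pos, of "heavy_a t" "heavy_b t"] by (simp add: abs_le_iff)
  also have "\<dots> \<le> d / n * (n / sqrt t) * (n / sqrt t) + lam * sqrt n * sqrt n"
    using sum_heavy_a sum_heavy_b sq_norms lam_pos
    by (intro add_mono mult_mono mult_left_mono real_sqrt_le_mono)
      (use t in \<open>auto simp: heavy_a_def heavy_b_def sq_norm_nonneg intro!: sum_nonneg\<close>)
  also have "\<dots> = real d * n / t + lam * n"
    using t n_pos by (simp add: field_simps flip: power2_eq_square)
  finally show ?thesis .
qed

lemma heavy_defect_le: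
  assumes "t > 0" and P: "\<And>x y. P x y \<Longrightarrow> t < a x \<and> t < b y \<and> b y \<le> a x"
  shows "(\<Sum>x<n. \<Sum>y<n. if P x y then adj E x y * defect x y else 0)
     \<le> lam * sqrt n * sqrt (real d * n / t + lam * n)"
proof -
  define Y where "Y x = {y. y < n \<and> (x, y) \<in> E \<and> P x y}" for x
  have Y_subset: "Y x \<subseteq> {..<n}" for x
    unfolding Y_def by auto
  have restrict: "(\<Sum>y<n. if y \<in> Y x then F y else 0) = (\<Sum>y\<in>Y x. F y)" for x F
    using Y_subset[of x] by (simp add: sum.If_cases Int_absorb1)
  have "(\<Sum>y<n. if P x y then adj E x y * defect x y else 0) = (\<Sum>y<n. if y \<in> Y x then defect x y else 0)"
    for x unfolding Y_def adj_def by (intro sum.cong refl) auto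
  then have "(\<Sum>x<n. \<Sum>y<n. if P x y then adj E x y * defect x y else 0) = (\<Sum>x<n. \<Sum>y\<in>Y x. defect x y)"
    by (simp add: restrict)
  also have "\<dots> \<le> lam * sqrt n * sqrt (\<Sum>x<n. \<Sum>y\<in>Y x. b y)"
    by (rule fibre_defect_sum_le[OF Y_subset])
  also have "\<dots> \<le> lam * sqrt n * sqrt (\<Sum>x<n. \<Sum>y<n. adj E x y * heavy_a t x * heavy_b t y)"
  proof -
    text \<open>On a heavy pair with \<open>b\<^sub>y \<le> a\<^sub>x\<close> we have \<open>b\<^sub>y \<le> \<surd>a\<^sub>x \<surd>b\<^sub>y\<close>.\<close>
    have "(if y \<in> Y x then b y else 0) \<le> adj E x y * heavy_a t x * heavy_b t y" for x y
    proof (cases "y \<in> Y x")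
      case True
      then have "(x, y) \<in> E" "t < a x" "t < b y" "b y \<le> a x"
        using P unfolding Y_def by auto
      have "b y = sqrt (b y) * sqrt (b y)"
        by simp
      also have "\<dots> \<le> sqrt (a x) * sqrt (b y)"
        using \<open>b y \<le> a x\<close> by (intro mult_right_mono) auto
      finally show ?thesis
        using True \<open>(x, y) \<in> E\<close> \<open>t < a x\<close> \<open>t < b y\<close> by (simp add: adj_def heavy_a_def heavy_b_def)
    qed (simp add: adj_def heavy_a_def heavy_b_def)
    then have "(\<Sum>x<n. \<Sum>y\<in>Y x. b y) \<le> (\<Sum>x<n. \<Sum>y<n. adj E x y * heavy_a t x * heavy_b t y)"
      unfolding restrict[symmetric] by (intro sum_mono)
    then show ?thesis
      using lam_pos by (intro mult_left_mono real_sqrt_le_mono) auto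
  qed
  also have "\<dots> \<le> lam * sqrt n * sqrt (real d * n / t + lam * n)"
    using heavy_edge_weight_le[OF \<open>t > 0\<close>] lam_pos by (intro mult_left_mono real_sqrt_le_mono) auto
  finally show ?thesis .
qed

theorem edge_defect_sum_le:
  fixes t :: real
  assumes "t > 0"
  shows "(\<Sum>x<n. \<Sum>y<n. adj E x y * defect x y)
    \<le> 2 * real d ^ 2 * t + 2 * (lam * sqrt n * sqrt (real d * n / t + lam * n))"
proof -
  txt \<open>Heavy pairs with \<open>a\<^sub>x < b\<^sub>y\<close> are handled by exchanging the roles of \<open>g\<close> and \<open>h\<close>.\<close>
  interpret swapped: expander_tampering n d E h g lam
    by unfold_locales (use reg se n_pos lam_pos g_range h_range in auto)
  have swapped_a: "swapped.a = b" and swapped_b: "swapped.b = a"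
    unfolding swapped.a_def swapped.b_def a_def b_def swapped.g_fibre_def swapped.h_fibre_def
      g_fibre_def h_fibre_def by auto
  have swapped_defect: "swapped.defect y x = defect x y" for x y
    unfolding swapped.defect_def defect_def swapped_a swapped_b
    by (simp add: edges_between_sym[OF regular_graphD(2)[OF reg]] swapped.g_fibre_def
        swapped.h_fibre_def g_fibre_def h_fibre_def)
  let ?L = "\<lambda>x y. a x \<le> t \<or> b y \<le> t"
  let ?H1 = "\<lambda>x y. t < a x \<and> t < b y \<and> b y \<le> a x"
  let ?H2 = "\<lambda>x y. t < a x \<and> t < b y \<and> a x < b y"
  let ?part = "\<lambda>P. (\<Sum>x<n. \<Sum>y<n. if P x y then adj E x y * defect x y else 0)"
  have split: "adj E x y * defect x y = (if ?L x y then adj E x y * defect x y else 0)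
      + (if ?H1 x y then adj E x y * defect x y else 0) + (if ?H2 x y then adj E x y * defect x y else 0)"
    for x y by auto
  have "(\<Sum>x<n. \<Sum>y<n. adj E x y * defect x y) = ?part ?L + ?part ?H1 + ?part ?H2"
    by (subst split) (simp only: sum.distrib)
  also have "?part ?L \<le> 2 * real d ^ 2 * t"
    using light_defect_le \<open>t > 0\<close> by simp
  also have "?part ?H1 \<le> lam * sqrt n * sqrt (real d * n / t + lam * n)"
    by (rule heavy_defect_le[OF \<open>t > 0\<close>]) auto
  also have "?part ?H2
      = (\<Sum>y<n. \<Sum>x<n. if t < swapped.a y \<and> t < swapped.b x \<and> swapped.b x < swapped.a y
          then adj E y x * swapped.defect y x else 0)"
    unfolding swapped_a swapped_b swapped_defect
    by (subst sum.swap, intro sum.cong refl) (simp add: adj_sym[OF regular_graphD(2)[OF reg]])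
  also have "\<dots> \<le> lam * sqrt n * sqrt (real d * n / t + lam * n)"
    by (rule swapped.heavy_defect_le[OF \<open>t > 0\<close>]) auto
  finally show ?thesis
    by simp
qed

end

section \<open>Non-malleability of the graph code\<close>

lemma stat_dist_two_point_le:
  assumes p: "set_pmf p \<subseteq> {u, v}" and q: "set_pmf q \<subseteq> {u, v}" and "u \<noteq> v"
  shows "stat_dist p q \<le> \<bar>pmf p u - pmf q u\<bar>"
proof -
  have prob: "measure_pmf.prob r A = (if u \<in> A then pmf r u else 0) + (if v \<in> A then 1 - pmf r u else 0)"
    if r: "set_pmf r \<subseteq> {u, v}" for r :: "'a pmf" and A
  proof -
    have prob_eq: "measure_pmf.prob r B = sum (pmf r) (B \<inter> {u, v})" for B
    proof -
      have "measure_pmf.prob r B = measure_pmf.prob r (B \<inter> {u, v})"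
        by (rule measure_prob_cong_0) (use r in \<open>auto simp: set_pmf_eq\<close>)
      also have "\<dots> = sum (pmf r) (B \<inter> {u, v})"
        by (rule measure_measure_pmf_finite) simp
      finally show ?thesis .
    qed
    have "pmf r u + pmf r v = 1"
      using prob_eq[of UNIV] \<open>u \<noteq> v\<close> by simp
    then show ?thesis
      using \<open>u \<noteq> v\<close> by (auto simp: prob_eq Int_insert_left)
  qed
  show ?thesis
    unfolding stat_dist_def
    by (rule cSUP_least) (auto simp: prob[OF p] prob[OF q])
qed

lemma split_state_nm_boolI:
  fixes enc :: "bool \<Rightarrow> ('l \<times> 'r) pmf" and dec :: "'l \<Rightarrow> 'r \<Rightarrow> bool option"
  assumes encodes: "\<And>s. set_pmf (enc s) \<subseteq> L \<times> R"
    and decodes: "\<And>s. measure_pmf.prob (enc s) {(l, r). dec l r = Some s} = 1"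
    and total: "\<And>l r. dec l r \<noteq> None" and "eps \<ge> 0"
    and gap: "\<And>f g. \<forall>x\<in>L. f x \<in> L \<Longrightarrow> \<forall>y\<in>R. g y \<in> R \<Longrightarrow>
      measure_pmf.prob (enc False) {(l, r). dec (f l) (g r) = Some True}
      - measure_pmf.prob (enc True) {(l, r). dec (f l) (g r) = Some True} \<le> eps"
  shows "split_state_nm enc dec L R eps"
  unfolding split_state_nm_def
proof (intro conjI allI impI encodes decodes)
  fix f g
  assume f: "\<forall>x\<in>L. f x \<in> L" and g: "\<forall>y\<in>R. g y \<in> R"
  let ?tampered = "\<lambda>s. map_pmf (\<lambda>(l, r). dec (f l) (g r)) (enc s)"
  define q1 where "q1 = pmf (?tampered True) (Some True)"
  define q0 where "q0 = pmf (?tampered False) (Some True)"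
  have tampered_set: "set_pmf (?tampered s) \<subseteq> {Some True, Some False}" for s
    using total by auto (metis (full_types) option.exhaust)
  text \<open>The simulator keeps the message with probability \<open>q\<^sub>1 - min q\<^sub>0 q\<^sub>1\<close>; otherwise it outputs
    the constant True with probability \<open>min q\<^sub>0 q\<^sub>1\<close> and False with probability \<open>1 - q\<^sub>1\<close>.\<close>
  define xs where "xs = [(Msg True, min q0 q1), (Same, q1 - min q0 q1), (Msg False, 1 - q1)]"
  have wf: "pmf_of_list_wf xs"
    unfolding xs_def q0_def q1_def by (intro pmf_of_list_wfI) (auto simp: pmf_le_1)
  define D where "D = pmf_of_list xs"
  have sim_set: "set_pmf (map_pmf (nm_outcome s) D) \<subseteq> {Some True, Some False}" for s
    using set_pmf_of_list[OF wf] unfolding D_def xs_def by (auto simp: nm_outcome_def split: bool.splits)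
  have sim_True: "pmf (map_pmf (nm_outcome s) D) (Some True) = (if s then q1 else min q0 q1)" for s
    unfolding pmf_map D_def measure_pmf_of_list[OF wf] unfolding xs_def
    by (cases s) (simp_all add: nm_outcome_def)
  have "q0 - q1 \<le> eps"
    using gap[OF f g] unfolding q0_def q1_def pmf_map by (simp add: vimage_def case_prod_unfold)
  then have "stat_dist (?tampered s) (map_pmf (nm_outcome s) D) \<le> eps" for s
    using stat_dist_two_point_le[OF tampered_set sim_set, of s s] \<open>eps \<ge> 0\<close>
    by (cases s) (auto simp: sim_True q0_def q1_def)
  then show "\<exists>D. \<forall>s. stat_dist (?tampered s) (map_pmf (nm_outcome s) D) \<le> eps"
    by blast
qed

lemma graph_code_correct:
  assumes reg: "regular_graph n E d" and "0 < d" "d < n"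
  shows "set_pmf (graph_enc n E s) \<subseteq> {0..<n} \<times> {0..<n}"
    and "measure_pmf.prob (graph_enc n E s) {(l, r). graph_dec E l r = Some s} = 1"
proof -
  define N where "N = {0..<n} \<times> {0..<n} - E"
  have E: "E \<subseteq> {0..<n} \<times> {0..<n}" "finite E"
    using regular_graphD(1)[OF reg] finite_subset by (auto simp: lessThan_atLeast0)
  have "E \<noteq> {}"
    using regular_graphD(4)[OF reg, of 0] assms by auto
  have "(0, 0) \<in> N"
    using regular_graphD(3)[OF reg, of 0] assms unfolding N_def by simp
  then have "N \<noteq> {}"
    by blast
  have "finite N"
    unfolding N_def by simp
  have enc: "graph_enc n E s = (if s then pmf_of_set E else pmf_of_set N)"
    unfolding graph_enc_def N_def ..
  show "set_pmf (graph_enc n E s) \<subseteq> {0..<n} \<times> {0..<n}"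
    using E \<open>E \<noteq> {}\<close> \<open>N \<noteq> {}\<close> \<open>finite N\<close> unfolding enc by (auto simp: N_def)
  have "E \<inter> {(l, r). (l, r) \<in> E} = E" "N \<inter> {(l, r). (l, r) \<notin> E} = N"
    unfolding N_def by auto
  then show "measure_pmf.prob (graph_enc n E s) {(l, r). graph_dec E l r = Some s} = 1"
    using E \<open>E \<noteq> {}\<close> \<open>N \<noteq> {}\<close> \<open>finite N\<close>
    unfolding enc by (simp add: graph_dec_def measure_pmf_of_set)
qed

lemma card_eq_sum_indicator:
  assumes "R \<subseteq> {..<n} \<times> {..<(n::nat)}"
  shows "real (card R) = (\<Sum>u<n. \<Sum>v<n. if (u, v) \<in> R then 1 else 0)"
proof -
  have "real (card R) = (\<Sum>p\<in>{..<n} \<times> {..<n}. if p \<in> R then 1 else 0)"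
    using assms by (simp add: sum.If_cases Int_absorb1)
  then show ?thesis
    by (simp add: sum.cartesian_product split_def)
qed

lemma card_edges:
  assumes reg: "regular_graph n E d"
  shows "real (card E) = n * d"
  using card_eq_sum_indicator[OF regular_graphD(1)[OF reg]] adj_row_sum[OF reg]
  unfolding adj_def by simp

lemma card_non_edges:
  assumes reg: "regular_graph n E d"
  shows "real (card ({0..<n} \<times> {0..<n} - E)) = n * (n - real d)"
proof -
  have E: "E \<subseteq> {0..<n} \<times> {0..<n}" and "finite E"
    using regular_graphD(1)[OF reg] finite_subset by (auto simp: lessThan_atLeast0)
  have "card ({0..<n} \<times> {0..<n} - E) = card ({0..<n} \<times> {0..<n}) - card E"
    and "card E \<le> card ({0..<n} \<times> {0..<n})"
    by (rule card_Diff_subset[OF \<open>finite E\<close> E], rule card_mono[OF _ E]) simp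
  then show ?thesis
    using card_edges[OF reg] by (simp add: of_nat_diff algebra_simps)
qed

context tampering
begin

lemma graph_code_tampering_gap:
  assumes "0 < d" "d < n"
  shows "measure_pmf.prob (graph_enc n E False) {(l, r). graph_dec E (g l) (h r) = Some True}
      - measure_pmf.prob (graph_enc n E True) {(l, r). graph_dec E (g l) (h r) = Some True}
      = (\<Sum>x<n. \<Sum>y<n. adj E x y * defect x y) / (real d * (real n - real d))"
proof -
  let ?Q = "{(l, r). graph_dec E (g l) (h r) = Some True}"
  define N where "N = {0..<n} \<times> {0..<n} - E"
  define tampered where "tampered = (\<Sum>u<n. \<Sum>v<n. adj E (g u) (h v))"
  define kept where "kept = (\<Sum>u<n. \<Sum>v<n. adj E u v * adj E (g u) (h v))"
  have E: "E \<subseteq> {..<n} \<times> {..<n}"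
    by (rule regular_graphD(1)[OF reg])
  have N: "N \<subseteq> {..<n} \<times> {..<n}"
    unfolding N_def by auto
  have "finite E"
    using E finite_subset by blast
  note card_E = card_edges[OF reg] and card_N = card_non_edges[OF reg, folded N_def]
  have "real (card (E \<inter> ?Q)) = kept"
    using E by (subst card_eq_sum_indicator[of _ n])
      (auto simp: kept_def adj_def graph_dec_def intro!: sum.cong)
  moreover have "real (card (N \<inter> ?Q)) = tampered - kept"
    using N by (subst card_eq_sum_indicator[of _ n])
      (auto simp: tampered_def kept_def adj_def graph_dec_def N_def sum_subtractf[symmetric]
        intro!: sum.cong)
  moreover have "E \<noteq> {}" "N \<noteq> {}"
    using card_E card_N \<open>0 < d\<close> \<open>d < n\<close> by auto
  moreover have "finite N"
    unfolding N_def by simp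
  ultimately have "measure_pmf.prob (graph_enc n E False) ?Q - measure_pmf.prob (graph_enc n E True) ?Q
      = (tampered - kept) / (n * (n - real d)) - kept / (n * d)"
    using \<open>finite E\<close> by (simp add: graph_enc_def measure_pmf_of_set card_N card_E flip: N_def)
  also have "\<dots> = (d / n * tampered - kept) / (real d * (real n - real d))"
    using \<open>0 < d\<close> \<open>d < n\<close> by (simp add: field_simps)
  finally show ?thesis
    unfolding edge_defect_sum_eq tampered_def kept_def .
qed

end

lemma graph_code_nm_trivial:
  assumes reg: "regular_graph n E d" and "0 < d" "d < n"
  shows "split_state_nm (graph_enc n E) (graph_dec E) {0..<n} {0..<n} 1"
proof (rule split_state_nm_boolI)
  fix A B :: "(nat \<times> nat) set"
  show "measure_pmf.prob (graph_enc n E False) A - measure_pmf.prob (graph_enc n E True) B \<le> 1"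
    using measure_pmf.prob_le_1[of "graph_enc n E False" A]
      measure_nonneg[of "measure_pmf (graph_enc n E True)" B] by linarith
qed (use graph_code_correct[OF assms] in \<open>auto simp: graph_dec_def\<close>)

lemma graph_code_nm_mixing:
  assumes reg: "regular_graph n E d" and se: "spectral_expander n E lam" and "lam > 0"
    and "0 < d" "d < n" and "t > (0 :: real)"
  shows "split_state_nm (graph_enc n E) (graph_dec E) {0..<n} {0..<n}
    ((2 * real d ^ 2 * t + 2 * (lam * sqrt n * sqrt (real d * n / t + lam * n)))
      / (real d * (real n - real d)))"
proof (rule split_state_nm_boolI)
  show "0 \<le> (2 * real d ^ 2 * t + 2 * (lam * sqrt n * sqrt (real d * n / t + lam * n)))
      / (real d * (real n - real d))"
    using assms by (intro divide_nonneg_pos) auto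
  fix g h
  assume "\<forall>x\<in>{0..<n}. g x \<in> {0..<n}" "\<forall>y\<in>{0..<n}. h y \<in> {0..<n}"
  then interpret expander_tampering n d E g h lam
    using assms by unfold_locales auto
  show "measure_pmf.prob (graph_enc n E False) {(l, r). graph_dec E (g l) (h r) = Some True}
      - measure_pmf.prob (graph_enc n E True) {(l, r). graph_dec E (g l) (h r) = Some True}
      \<le> (2 * real d ^ 2 * t + 2 * (lam * sqrt n * sqrt (real d * n / t + lam * n)))
        / (real d * (real n - real d))"
    unfolding graph_code_tampering_gap[OF \<open>0 < d\<close> \<open>d < n\<close>]
    using edge_defect_sum_le[OF \<open>t > 0\<close>] \<open>0 < d\<close> \<open>d < n\<close> by (intro divide_right_mono) auto
qed (use graph_code_correct[OF reg \<open>0 < d\<close> \<open>d < n\<close>] in \<open>auto simp: graph_dec_def\<close>)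

lemma expander_lam_ge_half:
  assumes reg: "regular_graph n E d" and se: "spectral_expander n E lam" and "lam > 0"
    and "2 \<le> d" and "2 * d \<le> n"
  shows "lam \<ge> 1 / 2"
proof -
  text \<open>Apply the mixing lemma to a vertex and its neighbourhood.\<close>
  have "n > 0"
    using assms by simp
  define N where "N = {y. (0, y) \<in> E}"
  have N: "N \<subseteq> {..<n}" "card N = d"
    unfolding N_def using regular_graphD(1)[OF reg] regular_graphD(4)[OF reg, of 0] \<open>n > 0\<close>
    by auto
  have "{0} \<subseteq> {..<n}"
    using \<open>n > 0\<close> by simp
  from expander_mixing_sets[OF reg se \<open>n > 0\<close> \<open>lam > 0\<close> this N(1)]
  have "\<bar>real d - d / n * d\<bar> \<le> lam * sqrt d"
    using N(2) unfolding N_def by (simp add: edges_between_def adj_def)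
  moreover have "d / n * d \<le> real d / 2"
  proof -
    have "real d * (2 * real d) \<le> real d * real n"
      using \<open>2 * d \<le> n\<close> by (intro mult_left_mono) auto
    then show ?thesis
      using \<open>n > 0\<close> by (simp add: divide_simps mult_ac)
  qed
  ultimately have "sqrt d * sqrt d \<le> (2 * lam) * sqrt d"
    by simp
  then have "sqrt d \<le> 2 * lam"
    by (rule mult_right_le_imp_le) (use \<open>2 \<le> d\<close> in simp)
  moreover have "sqrt d \<ge> 1"
    using \<open>2 \<le> d\<close> by simp
  ultimately show ?thesis
    by linarith
qed

lemma mixing_eps_at_d_over_lam:
  fixes n d lam :: real
  assumes "n \<ge> 0" "d > 0" "lam > 0"
  shows "2 * d\<^sup>2 * (d / lam) + 2 * (lam * sqrt n * sqrt (d * n / (d / lam) + lam * n))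
    = 2 * d ^ 3 / lam + 2 * sqrt 2 * (lam * sqrt lam) * n"
proof -
  have lin: "d * n / (d / lam) + lam * n = 2 * lam * n"
    using assms by (simp add: field_simps)
  have "lam * sqrt n * sqrt (2 * lam * n) = sqrt 2 * (lam * sqrt lam) * (sqrt n * sqrt n)"
    by (simp add: real_sqrt_mult mult_ac)
  also have "sqrt n * sqrt n = n"
    using assms by simp
  finally have sq: "lam * sqrt n * sqrt (2 * lam * n) = sqrt 2 * (lam * sqrt lam) * n" .
  show ?thesis
    unfolding lin sq by (simp add: power2_eq_square power3_eq_cube)
qed

lemma mixing_eps_le:
  fixes n d c L lam :: real
  assumes "d \<ge> 2" "2 * d \<le> n" "lam \<ge> 1 / 2" "c > 0" "L > 0" and dense: "c * d ^ 3 * L ^ 4 \<le> lam * n"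
  shows "(2 * d\<^sup>2 * (d / lam) + 2 * (lam * sqrt n * sqrt (d * n / (d / lam) + lam * n))) / (d * (n - d))
     \<le> (12 / (c * L ^ 4) + 6) * (lam * sqrt lam) / d"
proof -
  define P where "P = lam * sqrt lam"
  have "lam > 0" "d > 0" "n > 0" "P \<ge> 0"
    using assms by (simp_all add: P_def)
  have "(2 / 3)\<^sup>2 \<le> lam"
    using \<open>lam \<ge> 1 / 2\<close> by (simp add: power2_eq_square)
  then have "sqrt lam \<ge> 2 / 3"
    using real_sqrt_le_mono by fastforce
  then have P: "1 \<le> 3 * P"
    using \<open>lam \<ge> 1 / 2\<close> mult_mono[of "1 / 2" lam "2 / 3" "sqrt lam"] unfolding P_def by simp
  have "sqrt 2 \<le> sqrt ((3 / 2)\<^sup>2)"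
    by (rule real_sqrt_le_mono) (simp add: power2_eq_square)
  then have sqrt2: "4 * sqrt 2 \<le> 6"
    by simp
  have "d * (2 * d) \<le> d * n"
    using \<open>2 * d \<le> n\<close> \<open>d > 0\<close> by (intro mult_left_mono) auto
  then have "d * n / 2 \<le> d * (n - d)"
    by (simp add: algebra_simps)
  then have "(2 * d ^ 3 / lam + 2 * sqrt 2 * P * n) / (d * (n - d))
      \<le> (2 * d ^ 3 / lam + 2 * sqrt 2 * P * n) / (d * n / 2)"
    using \<open>lam > 0\<close> \<open>d > 0\<close> \<open>n > 0\<close> \<open>P \<ge> 0\<close> by (intro divide_left_mono) auto
  also have "\<dots> = 4 * (d\<^sup>2 / (lam * n)) + 4 * sqrt 2 * P / d"
    using \<open>lam > 0\<close> \<open>d > 0\<close> \<open>n > 0\<close> by (simp add: field_simps power2_eq_square power3_eq_cube)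
  also have "d\<^sup>2 / (lam * n) \<le> d\<^sup>2 / (c * d ^ 3 * L ^ 4)"
    using dense assms \<open>d > 0\<close> by (intro divide_left_mono) auto
  also have "\<dots> \<le> 3 * P / (c * L ^ 4 * d)"
    using P assms \<open>d > 0\<close> by (simp add: field_simps power2_eq_square power3_eq_cube)
  also have "4 * sqrt 2 * P / d \<le> 6 * P / d"
    using sqrt2 \<open>P \<ge> 0\<close> \<open>d > 0\<close> by (intro divide_right_mono mult_right_mono) auto
  finally show ?thesis
    using mixing_eps_at_d_over_lam[where n = n and d = d and lam = lam] \<open>lam > 0\<close> \<open>d > 0\<close> \<open>n > 0\<close> assms
    by (simp add: P_def field_simps)
qed

lemma sparse_lam_lower:
  fixes n d k lam :: real
  assumes "k > 0" "d \<ge> 1" "lam > 0" "n < 2 * d" and dense: "2 * k * d ^ 3 \<le> lam * n"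
  shows "k * sqrt k * d \<le> lam * sqrt lam"
proof -
  have "lam * n < lam * (2 * d)"
    using \<open>n < 2 * d\<close> \<open>lam > 0\<close> by simp
  with dense have "(k * d\<^sup>2) * d < lam * d"
    by (simp add: power2_eq_square power3_eq_cube mult_ac)
  then have lam: "k * d\<^sup>2 < lam"
    using \<open>d \<ge> 1\<close> by simp
  have "sqrt k * d = sqrt (k * d\<^sup>2)"
    using \<open>d \<ge> 1\<close> by (simp add: real_sqrt_mult)
  also have "\<dots> \<le> sqrt lam"
    using lam by simp
  finally have "(k * d\<^sup>2) * (sqrt k * d) \<le> lam * sqrt lam"
    using lam \<open>k > 0\<close> \<open>d \<ge> 1\<close> \<open>lam > 0\<close> by (intro mult_mono) auto
  moreover have "(k * sqrt k * d) * 1 \<le> (k * sqrt k * d) * d\<^sup>2"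
    using \<open>k > 0\<close> \<open>d \<ge> 1\<close> by (intro mult_left_mono) (simp_all add: one_le_power)
  ultimately show ?thesis
    by (simp add: mult_ac)
qed

lemma powr_three_halves: "x \<ge> 0 \<Longrightarrow> x powr (3/2) = x * sqrt x"
  using powr_add[of x 1 "1/2"] by (cases "x = 0") (simp_all add: powr_half_sqrt)

text \<open>The first two summands serve the case \<open>n \<ge> 2d\<close>, the last one the case \<open>n < 2d\<close>.\<close>
definition nm_constant :: "real \<Rightarrow> real" where
  "nm_constant c = 12 / (c * ln 2 ^ 4) + 6 + 1 / (c * ln 2 ^ 4 / 2 * sqrt (c * ln 2 ^ 4 / 2))"

lemma nm_constant_pos: "c > 0 \<Longrightarrow> nm_constant c > 0"
  unfolding nm_constant_def by (intro add_pos_pos) simp_all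

lemma graph_code_nm_sparse:
  assumes reg: "regular_graph n E d" and "2 \<le> d" "d < n" "n < 2 * d" "lam > 0" "c > 0"
    and dense: "c * real d ^ 3 * ln 2 ^ 4 \<le> lam * n"
  shows "\<exists>eps. split_state_nm (graph_enc n E) (graph_dec E) {0..<n} {0..<n} eps
    \<and> eps \<le> nm_constant c * (lam * sqrt lam) / real d"
proof -
  define k :: real where "k = c * ln 2 ^ 4 / 2"
  have "k > 0"
    unfolding k_def using \<open>c > 0\<close> by simp
  have "k * sqrt k * d \<le> lam * sqrt lam"
    using dense \<open>n < 2 * d\<close> \<open>k > 0\<close> \<open>2 \<le> d\<close> \<open>lam > 0\<close>
    by (intro sparse_lam_lower[where n = n]) (simp_all add: k_def mult_ac)
  then have "1 \<le> 1 / (k * sqrt k) * (lam * sqrt lam / d)"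
    using \<open>k > 0\<close> \<open>2 \<le> d\<close> by (simp add: field_simps)
  also have "\<dots> \<le> nm_constant c * (lam * sqrt lam / d)"
    unfolding nm_constant_def k_def[symmetric] using \<open>c > 0\<close> \<open>lam > 0\<close>
    by (intro mult_right_mono) simp_all
  finally show ?thesis
    using graph_code_nm_trivial[OF reg _ \<open>d < n\<close>] \<open>2 \<le> d\<close> by auto
qed

lemma graph_code_nm_dense:
  assumes reg: "regular_graph n E d" and se: "spectral_expander n E lam"
    and "2 \<le> d" "2 * d \<le> n" "lam > 0" "c > 0" and dense: "c * real d ^ 3 * ln 2 ^ 4 \<le> lam * n"
  shows "\<exists>eps. split_state_nm (graph_enc n E) (graph_dec E) {0..<n} {0..<n} eps
    \<and> eps \<le> nm_constant c * (lam * sqrt lam) / real d"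
proof -
  let ?t = "real d / lam"
  have "lam \<ge> 1 / 2"
    by (rule expander_lam_ge_half[OF reg se]) fact+
  have "split_state_nm (graph_enc n E) (graph_dec E) {0..<n} {0..<n}
    ((2 * real d ^ 2 * ?t + 2 * (lam * sqrt n * sqrt (real d * n / ?t + lam * n)))
      / (real d * (real n - real d)))"
    by (rule graph_code_nm_mixing[OF reg se \<open>lam > 0\<close>]) (use assms in simp_all)
  moreover have "(2 * real d ^ 2 * ?t + 2 * (lam * sqrt n * sqrt (real d * n / ?t + lam * n)))
      / (real d * (real n - real d)) \<le> (12 / (c * ln 2 ^ 4) + 6) * (lam * sqrt lam) / d"
    using mixing_eps_le[where n = n and d = d and lam = lam and c = c and L = "ln 2"]
      \<open>lam \<ge> 1 / 2\<close> assms by simp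
  moreover have "\<dots> \<le> nm_constant c * (lam * sqrt lam) / d"
    unfolding nm_constant_def using \<open>c > 0\<close> \<open>lam > 0\<close>
    by (intro divide_right_mono mult_right_mono) simp_all
  ultimately show ?thesis
    by (meson order_trans)
qed

lemma graph_code_nonmalleable:
  assumes "c > 0" and reg: "regular_graph n E d" and "2 \<le> d" "d < n"
    and se: "spectral_expander n E lam" and "lam > 0"
    and dense: "real n \<ge> c * real d ^ 3 * ln (real d) ^ 4 / lam"
  shows "\<exists>eps. split_state_nm (graph_enc n E) (graph_dec E) {0..<n} {0..<n} eps
    \<and> eps \<le> nm_constant c / ln 2 * ln (real d) * (lam * sqrt lam) / real d"
proof -
  have "ln 2 \<le> ln (real d)"
    using \<open>2 \<le> d\<close> by simp
  then have "c * real d ^ 3 * ln 2 ^ 4 \<le> c * real d ^ 3 * ln (real d) ^ 4"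
    using \<open>c > 0\<close> by (intro mult_left_mono power_mono) auto
  also have "\<dots> \<le> lam * real n"
    using dense \<open>lam > 0\<close> by (simp add: divide_le_eq mult.commute)
  finally obtain eps where nm: "split_state_nm (graph_enc n E) (graph_dec E) {0..<n} {0..<n} eps"
    and "eps \<le> nm_constant c * (lam * sqrt lam) / real d"
    using graph_code_nm_sparse[OF reg \<open>2 \<le> d\<close> \<open>d < n\<close> _ \<open>lam > 0\<close> \<open>c > 0\<close>]
      graph_code_nm_dense[OF reg se \<open>2 \<le> d\<close> _ \<open>lam > 0\<close> \<open>c > 0\<close>] by (cases "n < 2 * d") auto
  note \<open>eps \<le> nm_constant c * (lam * sqrt lam) / real d\<close>
  also have "\<dots> \<le> nm_constant c / ln 2 * ln (real d) * (lam * sqrt lam) / real d"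
    using \<open>ln 2 \<le> ln (real d)\<close> nm_constant_pos[OF \<open>c > 0\<close>] \<open>lam > 0\<close>
    by (intro divide_right_mono) (simp_all add: field_simps)
  finally show ?thesis
    using nm by blast
qed

theorem theorem3p3:
  "\<forall>c::real. c > 0 \<longrightarrow>
     (\<exists>C a :: real. C > 0 \<and> a > 0 \<and>
       (\<forall>(n::nat) (d::nat) (E::(nat \<times> nat) set) (lam::real).
          regular_graph n E d \<longrightarrow> 2 \<le> d \<longrightarrow> d < n \<longrightarrow>
          spectral_expander n E lam \<longrightarrow> lam > 0 \<longrightarrow>
          real n \<ge> c * real d ^ 3 * ln (real d) ^ 4 / lam \<longrightarrow>
          (\<exists>eps. split_state_nm (graph_enc n E) (graph_dec E) {0..<n} {0..<n} eps \<and>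
                 eps \<le> C * ln (real d) powr a * lam powr (3/2) / real d)))"
proof (intro allI impI)
  fix c :: real
  assume "c > 0"
  show "\<exists>C a. C > 0 \<and> a > 0 \<and> (\<forall>n d E lam. regular_graph n E d \<longrightarrow> 2 \<le> d \<longrightarrow> d < n \<longrightarrow>
      spectral_expander n E lam \<longrightarrow> lam > 0 \<longrightarrow> real n \<ge> c * real d ^ 3 * ln (real d) ^ 4 / lam \<longrightarrow>
      (\<exists>eps. split_state_nm (graph_enc n E) (graph_dec E) {0..<n} {0..<n} eps \<and>
        eps \<le> C * ln (real d) powr a * lam powr (3/2) / real d))"
  proof (rule exI[of _ "nm_constant c / ln 2"], rule exI[of _ 1], intro conjI allI impI)
    fix n d E lam
    assume "regular_graph n E d" "2 \<le> d" "d < n" "spectral_expander n E lam" "lam > 0"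
      and "real n \<ge> c * real d ^ 3 * ln (real d) ^ 4 / lam"
    then show "\<exists>eps. split_state_nm (graph_enc n E) (graph_dec E) {0..<n} {0..<n} eps \<and>
        eps \<le> nm_constant c / ln 2 * ln (real d) powr 1 * lam powr (3/2) / real d"
      using graph_code_nonmalleable[OF \<open>c > 0\<close>] by (simp add: powr_three_halves)
  qed (simp_all add: nm_constant_pos \<open>c > 0\<close>)
qed

end
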